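(* Let $\omega$ be a weight function and let $L$ be a linear partial differential operator on $\mathbb{T}^{N+1}$ with coefficients in $\mathcal{E}_{\{\omega\}}(\mathbb{T}^{N+1})$. If $L$ is globally $\{\omega\}$-solvable, then for every $h>0$ and $k>0$ there exists $C>0$ such that $$\Big|\int_{\mathbb{T}^{N+1}}fv\Big|\le C\|f\|_{1/h}\|{}^tLv\|_{1/k}$$ for all $f\in(\ker{}^tL)^\circ\cap\mathcal{E}_{\{\omega\},h}(\mathbb{T}^{N+1})$ and all $v\in\mathcal{E}_{\{\omega\}}(\mathbb{T}^{N+1})$ such that ${}^tLv\in\mathcal{E}_{\{\omega\},k}(\mathbb{T}^{N+1})$.
   Context: $\mathbb{T}^n=(\mathbb{R}/2\pi\mathbb{Z})^n$. A weight function is an increasing continuous $\omega:[0,\infty)\to[0,\infty)$ such that: there is $K\ge0$ with $\omega(2t)\le K(\omega(t)+1)$; $\omega(t)=O(t)$; $\log t=o(\omega(t))$ as $t\to\infty$; $\varphi(t)=\omega(e^t)$ convex (one may assume $\omega=0$ on $[0,1]$). $\varphi^*(t)=\sup_{s\ge0}\{st-\varphi(s)\}$. For $\lambda>0$, $\|f\|_\lambda=\sup_{x\in\mathbb{T}^n}\sup_{\alpha\in\mathbb{Z}_+^n}|\partial^\alpha f(x)|\exp(-\lambda\varphi^*(|\alpha|/\lambda))$; for $h>0$, $\mathcal{E}_{\{\omega\},h}(\mathbb{T}^n)=\{f\in C^\infty(\mathbb{T}^n):\|f\|_{1/h}<\infty\}$; $\mathcal{E}_{\{\omega\}}(\mathbb{T}^n)=\bigcup_{h}\mathcal{E}_{\{\omega\},h}(\mathbb{T}^n)$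 with the inductive limit topology; $\mathcal{E}'_{\{\omega\}}$ is its strong dual. ${}^tL$ is the formal transpose of $L$, extended to $\mathcal{E}'_{\{\omega\}}(\mathbb{T}^{N+1})$ by $\langle{}^tL\mu,\phi\rangle=\langle\mu,L\phi\rangle$. $(\ker{}^tL)^\circ=\{f\in\mathcal{E}_{\{\omega\}}(\mathbb{T}^{N+1}):\langle\mu,f\rangle=0\ \forall\mu\in\mathcal{E}'_{\{\omega\}}(\mathbb{T}^{N+1})$ with ${}^tL\mu=0\}$. $L$ is globally $\{\omega\}$-solvable if $L\mathcal{E}_{\{\omega\}}(\mathbb{T}^{N+1})=(\ker{}^tL)^\circ$. *)

theory Defs
  imports "HOL-Analysis.Analysis" "HOL-Library.Landau_Symbols"
begin

text \<open>Functions on the torus T^n (n = CARD('n) = N+1) are represented as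
  2 pi-periodic complex-valued functions on real^'n.\<close>

definition periodic_torus :: "(real^'n::finite \<Rightarrow> complex) \<Rightarrow> bool" where
  "periodic_torus f \<longleftrightarrow> (\<forall>x i. f (x + (2*pi) *\<^sub>R axis i 1) = f x)"

definition pd :: "'n::finite \<Rightarrow> (real^'n \<Rightarrow> complex) \<Rightarrow> real^'n \<Rightarrow> complex" where
  "pd i f x = vector_derivative (\<lambda>t. f (x + t *\<^sub>R axis i 1)) (at 0)"

fun pdl :: "'n::finite list \<Rightarrow> (real^'n \<Rightarrow> complex) \<Rightarrow> real^'n \<Rightarrow> complex" where
  "pdl [] f = f"
| "pdl (i # xs) f = pd i (pdl xs f)"

definition smooth_fun :: "(real^'n::finite \<Rightarrow> complex) \<Rightarrow> bool" where
  "smooth_fun f \<longleftrightarrow> (\<forall>xs. continuous_on UNIV (pdl xs f) \<and>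
     (\<forall>i x. ((\<lambda>t. pdl xs f (x + t *\<^sub>R axis i 1)) has_vector_derivative pd i (pdl xs f) x) (at 0)))"

definition mlen :: "('n::finite \<Rightarrow> nat) \<Rightarrow> nat" where
  "mlen \<alpha> = (\<Sum>i\<in>UNIV. \<alpha> i)"

text \<open>partial^alpha: iterate the partial derivatives with multiplicities alpha
  (for smooth functions the order is irrelevant).\<close>
definition Dm :: "('n::finite \<Rightarrow> nat) \<Rightarrow> (real^'n \<Rightarrow> complex) \<Rightarrow> real^'n \<Rightarrow> complex" where
  "Dm \<alpha> f = pdl (SOME xs. \<forall>i. count_list xs i = \<alpha> i) f"

definition weight_function :: "(real \<Rightarrow> real) \<Rightarrow> bool" where
  "weight_function \<omega> \<longleftrightarrow>
     mono_on {0..} \<omega> \<and> continuous_on {0..} \<omega> \<and> (\<forall>t\<ge>0. \<omega> t \<ge> 0) \<and>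
     (\<exists>K\<ge>0. \<forall>t\<ge>0. \<omega> (2*t) \<le> K * (\<omega> t + 1)) \<and>
     \<omega> \<in> O[at_top](\<lambda>t. t) \<and>
     (\<lambda>t. ln t) \<in> o[at_top](\<omega>) \<and>
     convex_on UNIV (\<lambda>t. \<omega> (exp t))"

definition phistar :: "(real \<Rightarrow> real) \<Rightarrow> real \<Rightarrow> real" where
  "phistar \<omega> t = (SUP s\<in>{0..}. s * t - \<omega> (exp s))"

definition wnorm :: "(real \<Rightarrow> real) \<Rightarrow> real \<Rightarrow> (real^'n::finite \<Rightarrow> complex) \<Rightarrow> ereal" where
  "wnorm \<omega> lam f = (SUP x. SUP \<alpha>::'n\<Rightarrow>nat.
      ereal (cmod (Dm \<alpha> f x) * exp (- lam * phistar \<omega> (real (mlen \<alpha>) / lam))))"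

definition Eh :: "(real \<Rightarrow> real) \<Rightarrow> real \<Rightarrow> (real^'n::finite \<Rightarrow> complex) set" where
  "Eh \<omega> h = {f. smooth_fun f \<and> periodic_torus f \<and> wnorm \<omega> (1/h) f < \<infinity>}"

definition Eom :: "(real \<Rightarrow> real) \<Rightarrow> (real^'n::finite \<Rightarrow> complex) set" where
  "Eom \<omega> = (\<Union>h\<in>{0<..}. Eh \<omega> h)"

text \<open>Elements of the dual E'_{omega}: linear functionals on E_{omega} that are continuous
  for the inductive limit topology, i.e. bounded on each step E_{omega,h}.\<close>
definition dual :: "(real \<Rightarrow> real) \<Rightarrow> ((real^'n::finite \<Rightarrow> complex) \<Rightarrow> complex) set" where
  "dual \<omega> = {\<mu>. (\<forall>f\<in>Eom \<omega>. \<forall>g\<in>Eom \<omega>. \<mu> (\<lambda>x. f x + g x) = \<mu> f + \<mu> g) \<and>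
                 (\<forall>f\<in>Eom \<omega>. \<forall>c. \<mu> (\<lambda>x. c * f x) = c * \<mu> f) \<and>
                 (\<forall>h>0. \<exists>C. \<forall>f\<in>Eh \<omega> h. ereal (cmod (\<mu> f)) \<le> ereal C * wnorm \<omega> (1/h) f)}"

definition Lop :: "nat \<Rightarrow> (('n::finite \<Rightarrow> nat) \<Rightarrow> real^'n \<Rightarrow> complex) \<Rightarrow>
                   (real^'n \<Rightarrow> complex) \<Rightarrow> real^'n \<Rightarrow> complex" where
  "Lop m a u x = (\<Sum>\<alpha>\<in>{\<alpha>. mlen \<alpha> \<le> m}. a \<alpha> x * Dm \<alpha> u x)"

definition tLop :: "nat \<Rightarrow> (('n::finite \<Rightarrow> nat) \<Rightarrow> real^'n \<Rightarrow> complex) \<Rightarrow>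
                   (real^'n \<Rightarrow> complex) \<Rightarrow> real^'n \<Rightarrow> complex" where
  "tLop m a v x = (\<Sum>\<alpha>\<in>{\<alpha>. mlen \<alpha> \<le> m}. (-1) ^ mlen \<alpha> * Dm \<alpha> (\<lambda>y. a \<alpha> y * v y) x)"

text \<open>ker tL in E'_{omega}: tL mu = 0 means <mu, L phi> = 0 for all phi in E_{omega}.\<close>
definition ker_tL :: "(real \<Rightarrow> real) \<Rightarrow> nat \<Rightarrow> (('n::finite \<Rightarrow> nat) \<Rightarrow> real^'n \<Rightarrow> complex) \<Rightarrow>
                     ((real^'n \<Rightarrow> complex) \<Rightarrow> complex) set" where
  "ker_tL \<omega> m a = {\<mu>\<in>dual \<omega>. \<forall>\<phi>\<in>Eom \<omega>. \<mu> (Lop m a \<phi>) = 0}"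

definition polar_ker_tL :: "(real \<Rightarrow> real) \<Rightarrow> nat \<Rightarrow> (('n::finite \<Rightarrow> nat) \<Rightarrow> real^'n \<Rightarrow> complex) \<Rightarrow>
                     (real^'n \<Rightarrow> complex) set" where
  "polar_ker_tL \<omega> m a = {f\<in>Eom \<omega>. \<forall>\<mu>\<in>ker_tL \<omega> m a. \<mu> f = 0}"

definition globally_solvable :: "(real \<Rightarrow> real) \<Rightarrow> nat \<Rightarrow> (('n::finite \<Rightarrow> nat) \<Rightarrow> real^'n \<Rightarrow> complex) \<Rightarrow> bool" where
  "globally_solvable \<omega> m a \<longleftrightarrow> Lop m a ` Eom \<omega> = polar_ker_tL \<omega> m a"

definition torus_integral :: "(real^'n::finite \<Rightarrow> complex) \<Rightarrow> complex" where
  "torus_integral f = integral (cbox 0 (\<chi> i. 2*pi)) f"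

end

(* The estimate is an instance of the uniform boundedness principle. Let P be the set of
   f in the polar of ker tL with finite norm ||f||_{1/h}. It is complete: a Cauchy sequence
   converges uniformly together with all its derivatives, and the polar is closed under such
   limits because every functional in ker tL is bounded on E_{omega,h}. By solvability each
   f in P is L u, and integration by parts on the torus gives int f v = int u tLv; hence for
   fixed f we have |int f v| <= C_f ||tLv||_{1/k} for all v. Baire's theorem, applied to the
   functionals f |-> int f v on P, makes C_f uniform: C_f <= C ||f||_{1/h}. Integration by
   parts against the derivatives d^alpha needs the order of differentiation to be irrelevant,
   which is Schwarz's theorem. *)

theory Submission
  imports Defs
begin

section \<open>Calculus of smooth functions\<close>

definition axis_differentiable :: "(real^'n::finite \<Rightarrow> complex) \<Rightarrow> bool" where
  "axis_differentiable f \<longleftrightarrow>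
     (\<forall>i x. ((\<lambda>t. f (x + t *\<^sub>R axis i 1)) has_vector_derivative pd i f x) (at 0))"

lemma pdl_append: "pdl (xs @ ys) f = pdl xs (pdl ys f)"
  by (induction xs) auto

lemma smooth_fun_iff:
  "smooth_fun f \<longleftrightarrow> (\<forall>xs. continuous_on UNIV (pdl xs f) \<and> axis_differentiable (pdl xs f))"
  unfolding smooth_fun_def axis_differentiable_def by auto

lemma smooth_fun_pdl: "smooth_fun f \<Longrightarrow> smooth_fun (pdl ys f)"
  unfolding smooth_fun_iff by (metis pdl_append)

lemma smooth_fun_pd: "smooth_fun f \<Longrightarrow> smooth_fun (pd i f)"
  using smooth_fun_pdl[of f "[i]"] by simp

lemma smooth_fun_imp_continuous: "smooth_fun f \<Longrightarrow> continuous_on UNIV f"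
  unfolding smooth_fun_iff by (metis pdl.simps(1))

lemma smooth_fun_imp_axis_differentiable: "smooth_fun f \<Longrightarrow> axis_differentiable f"
  unfolding smooth_fun_iff by (metis pdl.simps(1))

lemma axis_differentiable_has_vector_derivative:
  assumes "axis_differentiable f"
  shows "((\<lambda>t. f (x + t *\<^sub>R axis i 1)) has_vector_derivative pd i f (x + s *\<^sub>R axis i 1)) (at s)"
proof -
  have "((\<lambda>t. f ((x + s *\<^sub>R axis i 1) + t *\<^sub>R axis i 1)) has_vector_derivative
          pd i f (x + s *\<^sub>R axis i 1)) (at 0)"
    using assms unfolding axis_differentiable_def by blast
  then have "((\<lambda>t. f ((x + s *\<^sub>R axis i 1) + t *\<^sub>R axis i 1)) \<circ> (\<lambda>t. t - s) has_vector_derivative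
          1 *\<^sub>R pd i f (x + s *\<^sub>R axis i 1)) (at s)"
    by (intro vector_diff_chain_at) (auto intro!: derivative_eq_intros)
  moreover have "(\<lambda>t. f ((x + s *\<^sub>R axis i 1) + t *\<^sub>R axis i 1)) \<circ> (\<lambda>t. t - s) =
                 (\<lambda>t. f (x + t *\<^sub>R axis i 1))"
    by (auto simp: o_def algebra_simps)
  ultimately show ?thesis by simp
qed

lemma pd_eqI:
  assumes "\<And>x. ((\<lambda>t. f (x + t *\<^sub>R axis i 1)) has_vector_derivative g x) (at 0)"
  shows "pd i f = g"
  unfolding pd_def using assms by (intro ext vector_derivative_at)

lemma
  assumes "axis_differentiable f" "axis_differentiable g"
  shows pd_add: "pd i (\<lambda>y. f y + g y) = (\<lambda>y. pd i f y + pd i g y)"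
    and axis_differentiable_add: "axis_differentiable (\<lambda>y. f y + g y)"
proof -
  have *: "((\<lambda>t. f (x + t *\<^sub>R axis i 1) + g (x + t *\<^sub>R axis i 1))
             has_vector_derivative pd i f x + pd i g x) (at 0)" for i x
    using assms unfolding axis_differentiable_def by (intro has_vector_derivative_add) auto
  then show "pd i (\<lambda>y. f y + g y) = (\<lambda>y. pd i f y + pd i g y)" by (rule pd_eqI)
  with * show "axis_differentiable (\<lambda>y. f y + g y)"
    unfolding axis_differentiable_def using pd_eqI[OF *] by auto
qed

lemma
  assumes "axis_differentiable f"
  shows pd_cmult: "pd i (\<lambda>y. c * f y) = (\<lambda>y. c * pd i f y)"
    and axis_differentiable_cmult: "axis_differentiable (\<lambda>y. c * f y)"
proof -
  have *: "((\<lambda>t. c * f (x + t *\<^sub>R axis i 1)) has_vector_derivative c * pd i f x) (at 0)" for i x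
    using assms unfolding axis_differentiable_def by (intro has_vector_derivative_mult_right) auto
  then show "pd i (\<lambda>y. c * f y) = (\<lambda>y. c * pd i f y)" by (rule pd_eqI)
  with * show "axis_differentiable (\<lambda>y. c * f y)"
    unfolding axis_differentiable_def using pd_eqI[OF *] by auto
qed

lemma
  assumes "axis_differentiable f" "axis_differentiable g"
  shows pd_mult: "pd i (\<lambda>y. f y * g y) = (\<lambda>y. pd i f y * g y + f y * pd i g y)"
    and axis_differentiable_mult: "axis_differentiable (\<lambda>y. f y * g y)"
proof -
  have *: "((\<lambda>t. f (x + t *\<^sub>R axis i 1) * g (x + t *\<^sub>R axis i 1))
             has_vector_derivative pd i f x * g x + f x * pd i g x) (at 0)" for i x
  proof -
    have "((\<lambda>t. f (x + t *\<^sub>R axis i 1) * g (x + t *\<^sub>R axis i 1)) has_vector_derivative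
            f (x + 0 *\<^sub>R axis i 1) * pd i g x + pd i f x * g (x + 0 *\<^sub>R axis i 1)) (at 0)"
      using assms unfolding axis_differentiable_def by (intro has_vector_derivative_mult) auto
    then show ?thesis by (simp add: algebra_simps)
  qed
  then show "pd i (\<lambda>y. f y * g y) = (\<lambda>y. pd i f y * g y + f y * pd i g y)" by (rule pd_eqI)
  with * show "axis_differentiable (\<lambda>y. f y * g y)"
    unfolding axis_differentiable_def using pd_eqI[OF *] by auto
qed

lemma pdl_add:
  assumes "\<And>ys. length ys < length xs \<Longrightarrow>
             axis_differentiable (pdl ys f) \<and> axis_differentiable (pdl ys g)"
  shows "pdl xs (\<lambda>y. f y + g y) = (\<lambda>y. pdl xs f y + pdl xs g y)"
  using assms
proof (induction xs)
  case (Cons i xs)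
  then have "axis_differentiable (pdl xs f)" "axis_differentiable (pdl xs g)"
    by (metis impossible_Cons not_le_imp_less)+
  with Cons show ?case by (simp add: pd_add)
qed simp

lemma pdl_add_smooth:
  "smooth_fun f \<Longrightarrow> smooth_fun g \<Longrightarrow> pdl xs (\<lambda>y. f y + g y) = (\<lambda>y. pdl xs f y + pdl xs g y)"
  by (rule pdl_add) (simp add: smooth_fun_iff)

lemma pdl_cmult: "smooth_fun f \<Longrightarrow> pdl xs (\<lambda>y. c * f y) = (\<lambda>y. c * pdl xs f y)"
  by (induction xs) (simp_all add: pd_cmult smooth_fun_imp_axis_differentiable smooth_fun_pdl)

lemma smooth_fun_add: "smooth_fun f \<Longrightarrow> smooth_fun g \<Longrightarrow> smooth_fun (\<lambda>y. f y + g y)"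
  unfolding smooth_fun_iff[of "\<lambda>y. f y + g y"]
  by (simp add: pdl_add_smooth smooth_fun_iff continuous_on_add axis_differentiable_add)

lemma smooth_fun_cmult: "smooth_fun f \<Longrightarrow> smooth_fun (\<lambda>y. c * f y)"
  unfolding smooth_fun_iff[of "\<lambda>y. c * f y"]
  by (simp add: pdl_cmult smooth_fun_iff continuous_on_mult axis_differentiable_cmult)

lemma smooth_fun_diff: "smooth_fun f \<Longrightarrow> smooth_fun g \<Longrightarrow> smooth_fun (\<lambda>y. f y - g y)"
  using smooth_fun_add[OF _ smooth_fun_cmult, of f g "-1"] by simp

lemma pdl_diff_smooth:
  "smooth_fun f \<Longrightarrow> smooth_fun g \<Longrightarrow> pdl xs (\<lambda>y. f y - g y) = (\<lambda>y. pdl xs f y - pdl xs g y)"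
  using pdl_add_smooth[OF _ smooth_fun_cmult, of f g xs "-1"] pdl_cmult[of g xs "-1"] by simp

text \<open>Peeling off the innermost derivative turns a product into a sum of two products; hence
  the induction on the order, for all pairs of smooth factors at once.\<close>

lemma smooth_fun_mult_upto:
  "\<forall>xs f g. length xs \<le> n \<longrightarrow> smooth_fun f \<longrightarrow> smooth_fun g \<longrightarrow>
     continuous_on UNIV (pdl xs (\<lambda>y. f y * g y)) \<and> axis_differentiable (pdl xs (\<lambda>y. f y * g y))"
proof (induction n)
  case 0
  then show ?case
    by (simp add: continuous_on_mult axis_differentiable_mult
        smooth_fun_imp_continuous smooth_fun_imp_axis_differentiable)
next
  case (Suc n)
  show ?case
  proof (intro allI impI)
    fix xs :: "'a list" and f g :: "real^'a \<Rightarrow> complex"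
    assume len: "length xs \<le> Suc n" and f: "smooth_fun f" and g: "smooth_fun g"
    show "continuous_on UNIV (pdl xs (\<lambda>y. f y * g y)) \<and> axis_differentiable (pdl xs (\<lambda>y. f y * g y))"
    proof (cases xs rule: rev_cases)
      case Nil
      then show ?thesis using Suc.IH f g by (metis list.size(3) zero_le)
    next
      case (snoc ys i)
      define A where "A = (\<lambda>y. pd i f y * g y)"
      define B where "B = (\<lambda>y. f y * pd i g y)"
      have ys: "length ys \<le> n" using len snoc by simp
      have IH: "continuous_on UNIV (pdl zs A) \<and> axis_differentiable (pdl zs A)"
               "continuous_on UNIV (pdl zs B) \<and> axis_differentiable (pdl zs B)"
        if "length zs \<le> n" for zs
        using Suc.IH that f g smooth_fun_pd unfolding A_def B_def by blast+
      have "pdl xs (\<lambda>y. f y * g y) = pdl ys (\<lambda>y. A y + B y)"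
        using snoc pdl_append[of ys "[i]"]
        by (simp add: pd_mult smooth_fun_imp_axis_differentiable f g A_def B_def)
      also have "\<dots> = (\<lambda>y. pdl ys A y + pdl ys B y)"
        by (rule pdl_add) (use IH ys in auto)
      finally show ?thesis
        using IH[OF ys] by (simp add: continuous_on_add axis_differentiable_add)
    qed
  qed
qed

lemma smooth_fun_mult: "smooth_fun f \<Longrightarrow> smooth_fun g \<Longrightarrow> smooth_fun (\<lambda>y. f y * g y)"
  unfolding smooth_fun_iff[of "\<lambda>y. f y * g y"] using smooth_fun_mult_upto by blast

lemma pd_const: "pd i (\<lambda>y. c) = (\<lambda>y. 0)"
  by (rule pd_eqI) (auto intro!: derivative_eq_intros)

lemma smooth_fun_const: "smooth_fun (\<lambda>y. c)"
proof -
  have "axis_differentiable (\<lambda>y. c)" for c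
    unfolding axis_differentiable_def pd_const by (auto intro!: derivative_eq_intros)
  moreover have "pdl xs (\<lambda>y. c) = (if xs = [] then (\<lambda>y. c) else (\<lambda>y. 0))" for xs
    by (induction xs) (auto simp: pd_const)
  ultimately show ?thesis
    unfolding smooth_fun_iff by (metis continuous_on_const)
qed

section \<open>Symmetry of second partial derivatives\<close>

lemma increment_linearization_bound:
  fixes \<psi> \<psi>' :: "real \<Rightarrow> 'a::real_normed_vector"
  assumes deriv: "\<And>\<tau>. \<tau> \<in> closed_segment 0 t \<Longrightarrow> (\<psi> has_vector_derivative \<psi>' \<tau>) (at \<tau>)"
    and close: "\<And>\<tau>. \<tau> \<in> closed_segment 0 t \<Longrightarrow> norm (\<psi>' \<tau> - c) \<le> e"
  shows "norm (\<psi> t - \<psi> 0 - t *\<^sub>R c) \<le> \<bar>t\<bar> * e"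
proof -
  have "norm ((\<psi> t - t *\<^sub>R c) - (\<psi> 0 - 0 *\<^sub>R c)) \<le> e * norm (t - 0)"
  proof (rule differentiable_bound[where f'="\<lambda>\<tau> h. h *\<^sub>R (\<psi>' \<tau> - c)"])
    fix \<tau> assume \<tau>: "\<tau> \<in> closed_segment 0 t"
    have "((\<lambda>\<tau>. \<psi> \<tau> - \<tau> *\<^sub>R c) has_vector_derivative (\<psi>' \<tau> - c)) (at \<tau>)"
      using deriv[OF \<tau>] by (intro has_vector_derivative_diff) (auto intro!: derivative_eq_intros)
    then show "((\<lambda>\<tau>. \<psi> \<tau> - \<tau> *\<^sub>R c) has_derivative (\<lambda>h. h *\<^sub>R (\<psi>' \<tau> - c))) (at \<tau> within closed_segment 0 t)"
      unfolding has_vector_derivative_def by (rule has_derivative_at_withinI)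
    show "onorm (\<lambda>h. h *\<^sub>R (\<psi>' \<tau> - c)) \<le> e"
    proof (rule onorm_le)
      fix h :: real
      show "norm (h *\<^sub>R (\<psi>' \<tau> - c)) \<le> e * norm h"
        using mult_left_mono[OF close[OF \<tau>], of "\<bar>h\<bar>"] by (simp add: mult.commute)
    qed
  qed auto
  moreover have "(\<psi> t - t *\<^sub>R c) - (\<psi> 0 - 0 *\<^sub>R c) = \<psi> t - \<psi> 0 - t *\<^sub>R c"
    by (simp add: algebra_simps)
  ultimately show ?thesis by (simp add: algebra_simps)
qed

text \<open>The mixed second difference of \<open>g\<close> with step \<open>s\<close> approximates
  \<open>s\<^sup>2 \<cdot> \<partial>\<^sub>j \<partial>\<^sub>i g x\<close>; since the difference is symmetric in \<open>i\<close> and \<open>j\<close>, so are continuous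
  mixed partials.\<close>

lemma second_difference_approx:
  fixes g :: "real^'n::finite \<Rightarrow> complex"
  assumes g: "axis_differentiable g" "axis_differentiable (pd i g)" and s: "s > 0"
    and near: "\<And>y. norm (y - x) \<le> 2 * s \<Longrightarrow> norm (pd j (pd i g) y - pd j (pd i g) x) \<le> \<epsilon>"
  shows "norm ((g (x + s *\<^sub>R axis i 1 + s *\<^sub>R axis j 1) - g (x + s *\<^sub>R axis i 1)
           - g (x + s *\<^sub>R axis j 1) + g x) - (s * s) *\<^sub>R pd j (pd i g) x) \<le> s * s * \<epsilon>"
proof -
  define \<phi> where "\<phi> \<sigma> = g (x + s *\<^sub>R axis j 1 + \<sigma> *\<^sub>R axis i 1) - g (x + \<sigma> *\<^sub>R axis i 1)" for \<sigma>
  define \<phi>' where "\<phi>' \<sigma> = pd i g (x + s *\<^sub>R axis j 1 + \<sigma> *\<^sub>R axis i 1) - pd i g (x + \<sigma> *\<^sub>R axis i 1)"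
    for \<sigma>
  have seg: "closed_segment 0 s = {0..s}" using s by (simp add: closed_segment_eq_real_ivl)
  have "norm (\<phi>' \<sigma> - s *\<^sub>R pd j (pd i g) x) \<le> s * \<epsilon>" if \<sigma>: "\<sigma> \<in> {0..s}" for \<sigma>
  proof -
    have "norm (pd i g (x + \<sigma> *\<^sub>R axis i 1 + s *\<^sub>R axis j 1) - pd i g (x + \<sigma> *\<^sub>R axis i 1 + 0 *\<^sub>R axis j 1)
            - s *\<^sub>R pd j (pd i g) x) \<le> \<bar>s\<bar> * \<epsilon>"
    proof (rule increment_linearization_bound)
      fix \<tau> assume \<tau>: "\<tau> \<in> closed_segment 0 s"
      show "((\<lambda>\<tau>. pd i g (x + \<sigma> *\<^sub>R axis i 1 + \<tau> *\<^sub>R axis j 1)) has_vector_derivative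
              pd j (pd i g) (x + \<sigma> *\<^sub>R axis i 1 + \<tau> *\<^sub>R axis j 1)) (at \<tau>)"
        by (rule axis_differentiable_has_vector_derivative[OF g(2)])
      have "norm (\<sigma> *\<^sub>R axis i 1 + \<tau> *\<^sub>R (axis j 1 :: real^'n)) \<le> \<bar>\<sigma>\<bar> + \<bar>\<tau>\<bar>"
        by (rule order_trans[OF norm_triangle_ineq]) simp
      then have "norm ((x + \<sigma> *\<^sub>R axis i 1 + \<tau> *\<^sub>R axis j 1) - x) \<le> 2 * s"
        using \<sigma> \<tau> seg by (auto simp: algebra_simps)
      then show "norm (pd j (pd i g) (x + \<sigma> *\<^sub>R axis i 1 + \<tau> *\<^sub>R axis j 1) - pd j (pd i g) x) \<le> \<epsilon>"
        by (rule near)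
    qed
    then show ?thesis using s by (simp add: \<phi>'_def algebra_simps)
  qed
  moreover have "(\<phi> has_vector_derivative \<phi>' \<sigma>) (at \<sigma>)" for \<sigma>
    unfolding \<phi>_def \<phi>'_def
    by (intro has_vector_derivative_diff axis_differentiable_has_vector_derivative[OF g(1)])
  ultimately have "norm (\<phi> s - \<phi> 0 - s *\<^sub>R (s *\<^sub>R pd j (pd i g) x)) \<le> \<bar>s\<bar> * (s * \<epsilon>)"
    by (intro increment_linearization_bound) (auto simp: seg)
  then show ?thesis using s by (simp add: \<phi>_def algebra_simps)
qed

lemma pd_pd_commute_at:
  fixes g :: "real^'n::finite \<Rightarrow> complex"
  assumes "axis_differentiable g" "axis_differentiable (pd i g)" "axis_differentiable (pd j g)"
    and cont: "isCont (pd j (pd i g)) x" "isCont (pd i (pd j g)) x"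
  shows "pd j (pd i g) x = pd i (pd j g) x"
proof (rule ccontr)
  let ?H = "pd j (pd i g)" and ?K = "pd i (pd j g)"
  assume "?H x \<noteq> ?K x"
  define \<epsilon> where "\<epsilon> = norm (?H x - ?K x) / 4"
  have \<epsilon>: "\<epsilon> > 0" using \<open>?H x \<noteq> ?K x\<close> by (simp add: \<epsilon>_def)
  obtain d1 where d1: "d1 > 0" "\<And>y. dist y x < d1 \<Longrightarrow> dist (?H y) (?H x) < \<epsilon>"
    using cont(1) \<epsilon> unfolding continuous_at_eps_delta by blast
  obtain d2 where d2: "d2 > 0" "\<And>y. dist y x < d2 \<Longrightarrow> dist (?K y) (?K x) < \<epsilon>"
    using cont(2) \<epsilon> unfolding continuous_at_eps_delta by blast
  define s where "s = min d1 d2 / 3"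
  have s: "s > 0" "2 * s < d1" "2 * s < d2" using d1 d2 by (simp_all add: s_def min_def)
  define D where "D = g (x + s *\<^sub>R axis i 1 + s *\<^sub>R axis j 1) - g (x + s *\<^sub>R axis i 1)
                      - g (x + s *\<^sub>R axis j 1) + g x"
  have "norm (D - (s * s) *\<^sub>R ?H x) \<le> s * s * \<epsilon>"
    unfolding D_def
  proof (rule second_difference_approx[OF assms(1,2) s(1)])
    fix y assume "norm (y - x) \<le> 2 * s"
    then have "dist y x < d1" using s by (simp add: dist_norm)
    then show "norm (?H y - ?H x) \<le> \<epsilon>" using d1(2) by (simp add: dist_norm less_imp_le)
  qed
  moreover have "norm (D - (s * s) *\<^sub>R ?K x) \<le> s * s * \<epsilon>"
  proof -
    have "D = g (x + s *\<^sub>R axis j 1 + s *\<^sub>R axis i 1) - g (x + s *\<^sub>R axis j 1)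
              - g (x + s *\<^sub>R axis i 1) + g x"
      by (simp add: D_def algebra_simps)
    also have "norm (\<dots> - (s * s) *\<^sub>R ?K x) \<le> s * s * \<epsilon>"
    proof (rule second_difference_approx[OF assms(1,3) s(1)])
      fix y assume "norm (y - x) \<le> 2 * s"
      then have "dist y x < d2" using s by (simp add: dist_norm)
      then show "norm (?K y - ?K x) \<le> \<epsilon>" using d2(2) by (simp add: dist_norm less_imp_le)
    qed
    finally show ?thesis .
  qed
  ultimately have "norm ((s * s) *\<^sub>R (?H x - ?K x)) \<le> 2 * (s * s * \<epsilon>)"
    using norm_triangle_ineq4[of "D - (s * s) *\<^sub>R ?K x" "D - (s * s) *\<^sub>R ?H x"]
    by (simp add: algebra_simps)
  then have "norm (?H x - ?K x) \<le> 2 * \<epsilon>" using s(1) by simp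
  then show False using \<epsilon> by (simp add: \<epsilon>_def)
qed

lemma pd_pd_commute:
  assumes "smooth_fun g"
  shows "pd j (pd i g) = pd i (pd j g)"
proof
  fix x
  have "isCont (pd j (pd i g)) x" "isCont (pd i (pd j g)) x"
    using assms by (metis UNIV_I continuous_on_eq_continuous_at open_UNIV
        smooth_fun_imp_continuous smooth_fun_pd)+
  then show "pd j (pd i g) x = pd i (pd j g) x"
    using assms by (intro pd_pd_commute_at) (simp_all add: smooth_fun_imp_axis_differentiable smooth_fun_pd)
qed

lemma pdl_pd_commute: "smooth_fun g \<Longrightarrow> pdl ys (pd i g) = pd i (pdl ys g)"
  by (induction ys) (simp_all add: pd_pd_commute smooth_fun_pdl)

lemma pdl_perm: "smooth_fun f \<Longrightarrow> mset xs = mset ys \<Longrightarrow> pdl xs f = pdl ys f"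
proof (induction xs arbitrary: ys)
  case (Cons i xs)
  then obtain ys1 ys2 where ys: "ys = ys1 @ i # ys2"
    by (metis list.set_intros(1) set_mset_mset split_list)
  then have "pdl xs f = pdl (ys1 @ ys2) f" using Cons by simp
  moreover have "pdl ys f = pd i (pdl (ys1 @ ys2) f)"
    using pdl_pd_commute[OF smooth_fun_pdl[OF Cons.prems(1)]] by (simp add: ys pdl_append)
  ultimately show ?case by simp
qed simp

definition index_list :: "('n::finite \<Rightarrow> nat) \<Rightarrow> 'n list" where
  "index_list \<alpha> = (SOME xs. \<forall>i. count_list xs i = \<alpha> i)"

lemma count_list_index_list: "count_list (index_list \<alpha>) i = \<alpha> i"
proof -
  obtain xs where xs: "mset xs = Abs_multiset \<alpha>" using ex_mset by blast
  have "count (Abs_multiset \<alpha>) = \<alpha>" by (rule count_Abs_multiset) simp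
  then have "\<forall>i. count_list xs i = \<alpha> i" using xs by (simp flip: count_mset)
  then have "\<forall>i. count_list (index_list \<alpha>) i = \<alpha> i"
    unfolding index_list_def by (rule someI)
  then show ?thesis ..
qed

lemma length_index_list: "length (index_list \<alpha>) = mlen \<alpha>"
  unfolding mlen_def using sum_count_set[of "index_list \<alpha>" UNIV]
  by (simp add: count_list_index_list)

lemma Dm_eq_pdl_index_list: "Dm \<alpha> f = pdl (index_list \<alpha>) f"
  unfolding Dm_def index_list_def ..

lemma pdl_eq_Dm: "smooth_fun f \<Longrightarrow> pdl xs f = Dm (count_list xs) f"
  unfolding Dm_eq_pdl_index_list by (rule pdl_perm) (auto simp: multiset_eq_iff count_mset count_list_index_list)

lemma Dm_zero: "Dm (\<lambda>i::'n::finite. 0) f = f"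
proof -
  have "index_list (\<lambda>i::'n. 0::nat) = []"
    using count_list_index_list[of "\<lambda>i::'n. 0::nat"] by (metis count_list_0_iff last_in_set)
  then show ?thesis unfolding Dm_eq_pdl_index_list by simp
qed

lemma Dm_add: "smooth_fun f \<Longrightarrow> smooth_fun g \<Longrightarrow> Dm \<alpha> (\<lambda>y. f y + g y) = (\<lambda>y. Dm \<alpha> f y + Dm \<alpha> g y)"
  unfolding Dm_eq_pdl_index_list by (rule pdl_add_smooth)

lemma Dm_cmult: "smooth_fun f \<Longrightarrow> Dm \<alpha> (\<lambda>y. c * f y) = (\<lambda>y. c * Dm \<alpha> f y)"
  unfolding Dm_eq_pdl_index_list by (rule pdl_cmult)

lemma Dm_diff: "smooth_fun f \<Longrightarrow> smooth_fun g \<Longrightarrow> Dm \<alpha> (\<lambda>y. f y - g y) = (\<lambda>y. Dm \<alpha> f y - Dm \<alpha> g y)"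
  unfolding Dm_eq_pdl_index_list by (rule pdl_diff_smooth)

lemma Dm_const_zero: "Dm \<alpha> (\<lambda>y. 0) = (\<lambda>y. 0)"
  using Dm_cmult[OF smooth_fun_const[of 1], of \<alpha> 0] by simp

lemma finite_mlen_le: "finite {\<alpha>::'n::finite \<Rightarrow> nat. mlen \<alpha> \<le> m}"
proof (rule finite_subset)
  show "{\<alpha>::'n \<Rightarrow> nat. mlen \<alpha> \<le> m} \<subseteq> Pi\<^sub>E UNIV (\<lambda>_. {..m})"
  proof
    fix \<alpha> :: "'n \<Rightarrow> nat" assume "\<alpha> \<in> {\<alpha>. mlen \<alpha> \<le> m}"
    then have "\<alpha> i \<le> m" for i unfolding mlen_def using member_le_sum[of i UNIV \<alpha>] by auto
    then show "\<alpha> \<in> Pi\<^sub>E UNIV (\<lambda>_. {..m})" by (simp add: PiE_UNIV_domain)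
  qed
qed (simp add: finite_PiE)

section \<open>Integration on the torus\<close>

definition smooth_periodic :: "(real^'n::finite \<Rightarrow> complex) \<Rightarrow> bool" where
  "smooth_periodic f \<longleftrightarrow> smooth_fun f \<and> periodic_torus f"

lemma periodic_torus_pd:
  assumes "periodic_torus f"
  shows "periodic_torus (pd i f)"
  unfolding periodic_torus_def
proof (intro allI)
  fix x j
  have "f (x + (2*pi) *\<^sub>R axis j 1 + t *\<^sub>R axis i 1) = f (x + t *\<^sub>R axis i 1)" for t
  proof -
    have "x + (2*pi) *\<^sub>R axis j 1 + t *\<^sub>R axis i 1 = (x + t *\<^sub>R axis i 1) + (2*pi) *\<^sub>R axis j 1"
      by (simp add: add_ac)
    then show ?thesis using assms unfolding periodic_torus_def by (simp only:)
  qed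
  then show "pd i f (x + (2*pi) *\<^sub>R axis j 1) = pd i f x"
    unfolding pd_def by simp
qed

lemma periodic_torus_pdl: "periodic_torus f \<Longrightarrow> periodic_torus (pdl xs f)"
  by (induction xs) (auto intro: periodic_torus_pd)

lemma smooth_periodic_mult: "smooth_periodic f \<Longrightarrow> smooth_periodic g \<Longrightarrow> smooth_periodic (\<lambda>x. f x * g x)"
  unfolding smooth_periodic_def periodic_torus_def by (auto intro: smooth_fun_mult)

lemma smooth_periodic_add: "smooth_periodic f \<Longrightarrow> smooth_periodic g \<Longrightarrow> smooth_periodic (\<lambda>x. f x + g x)"
  unfolding smooth_periodic_def periodic_torus_def by (auto intro: smooth_fun_add)

lemma smooth_periodic_cmult: "smooth_periodic f \<Longrightarrow> smooth_periodic (\<lambda>x. c * f x)"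
  unfolding smooth_periodic_def periodic_torus_def by (auto intro: smooth_fun_cmult)

lemma smooth_periodic_diff: "smooth_periodic f \<Longrightarrow> smooth_periodic g \<Longrightarrow> smooth_periodic (\<lambda>x. f x - g x)"
  unfolding smooth_periodic_def periodic_torus_def by (auto intro: smooth_fun_diff)

lemma smooth_periodic_const: "smooth_periodic (\<lambda>x. c)"
  unfolding smooth_periodic_def periodic_torus_def by (simp add: smooth_fun_const)

lemma smooth_periodic_pd: "smooth_periodic f \<Longrightarrow> smooth_periodic (pd i f)"
  unfolding smooth_periodic_def by (auto intro: smooth_fun_pd periodic_torus_pd)

lemma smooth_periodic_pdl: "smooth_periodic f \<Longrightarrow> smooth_periodic (pdl xs f)"
  unfolding smooth_periodic_def by (auto intro: smooth_fun_pdl periodic_torus_pdl)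

lemma smooth_periodic_Dm: "smooth_periodic f \<Longrightarrow> smooth_periodic (Dm \<alpha> f)"
  unfolding Dm_eq_pdl_index_list by (rule smooth_periodic_pdl)

lemma smooth_periodic_imp_continuous: "smooth_periodic f \<Longrightarrow> continuous_on UNIV f"
  unfolding smooth_periodic_def by (auto intro: smooth_fun_imp_continuous)

lemma continuous_imp_integrable_on_cbox:
  "continuous_on UNIV f \<Longrightarrow> (f::'a::euclidean_space \<Rightarrow> 'b::banach) integrable_on cbox u w"
  by (rule integrable_continuous) (rule continuous_on_subset, auto)

lemma smooth_periodic_integrable: "smooth_periodic f \<Longrightarrow> f integrable_on cbox u w"
  by (intro continuous_imp_integrable_on_cbox smooth_periodic_imp_continuous)

lemma measure_torus: "measure lborel (cbox 0 (\<chi> j::'n::finite. 2*pi)) = (2*pi) ^ CARD('n)"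
proof -
  have "0 \<in> cbox 0 (\<chi> j::'n. 2*pi)" by (simp add: mem_box_cart)
  then show ?thesis by (subst content_cbox_cart) auto
qed

lemma torus_integral_bound:
  fixes \<phi> :: "real^'n::finite \<Rightarrow> complex"
  assumes "continuous_on UNIV \<phi>" and "\<And>y. y \<in> cbox 0 (\<chi> j. 2*pi) \<Longrightarrow> cmod (\<phi> y) \<le> B"
  shows "cmod (torus_integral \<phi>) \<le> B * (2*pi) ^ CARD('n)"
proof -
  have "0 \<in> cbox 0 (\<chi> j::'n. 2*pi)" by (simp add: mem_box_cart)
  then have B: "0 \<le> B" using assms(2) norm_ge_zero order_trans by blast
  have "(\<phi> has_integral torus_integral \<phi>) (cbox 0 (\<chi> j. 2*pi))"
    unfolding torus_integral_def
    by (intro integrable_integral continuous_imp_integrable_on_cbox assms(1))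
  from has_integral_bound[OF B this assms(2)] show ?thesis unfolding measure_torus .
qed

text \<open>The shifted box is cut at \<open>x\<^sub>i = 2\<pi>\<close>, and the part beyond the cut is moved back by
  periodicity.\<close>

lemma torus_integral_shift:
  fixes F :: "real^'n::finite \<Rightarrow> complex"
  assumes per: "periodic_torus F" and cont: "continuous_on UNIV F" and t: "0 \<le> t" "t \<le> 2*pi"
  shows "torus_integral (\<lambda>x. F (x + t *\<^sub>R axis i 1)) = torus_integral F"
proof -
  define b :: "real^'n" where "b = (\<chi> j. 2*pi)"
  define e :: "real^'n" where "e = axis i 1"
  define b1 :: "real^'n" where "b1 = (\<chi> j. if j = i then t else 2*pi)"
  have eB: "e \<in> Basis" unfolding e_def by simp
  have xe: "x \<bullet> e = x $ i" for x unfolding e_def by (simp add: inner_axis)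
  have ev: "(c *\<^sub>R e) $ j = (if j = i then c else 0)" for c j unfolding e_def by (simp add: axis_def)
  have mem_i: "x \<in> cbox u w \<longleftrightarrow> (u$i \<le> x$i \<and> x$i \<le> w$i) \<and> (\<forall>j. j \<noteq> i \<longrightarrow> u$j \<le> x$j \<and> x$j \<le> w$j)"
    for x u w :: "real^'n"
    unfolding mem_box_cart by metis
  have int: "F integrable_on cbox u w" for u w by (rule continuous_imp_integrable_on_cbox[OF cont])
  have s1: "cbox (t *\<^sub>R e) (b + t *\<^sub>R e) \<inter> {x. x \<bullet> e \<le> 2*pi} = cbox 0 b \<inter> {x. t \<le> x \<bullet> e}"
    using t by (auto simp del: vector_scaleR_component simp: mem_i b_def xe ev)
  have s2: "cbox (t *\<^sub>R e) (b + t *\<^sub>R e) \<inter> {x. 2*pi \<le> x \<bullet> e} = cbox ((2*pi) *\<^sub>R e + 0) ((2*pi) *\<^sub>R e + b1)"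
    using t by (auto simp del: vector_scaleR_component simp: mem_i b_def b1_def xe ev)
  have s3: "cbox 0 b \<inter> {x. x \<bullet> e \<le> t} = cbox 0 b1"
    using t by (auto simp del: vector_scaleR_component simp: mem_i b_def b1_def xe ev)
  have "F \<circ> (+) ((2*pi) *\<^sub>R e) = F"
    using per unfolding periodic_torus_def e_def by (auto simp: add.commute)
  then have "((F \<circ> (+) ((2*pi) *\<^sub>R e)) has_integral integral (cbox 0 b1) F) (cbox 0 b1)"
    using int by (simp add: integrable_integral)
  then have I2: "(F has_integral integral (cbox 0 b1) F) (cbox ((2*pi) *\<^sub>R e + 0) ((2*pi) *\<^sub>R e + b1))"
    using has_integral_shift_cbox_iff[of F "(2*pi) *\<^sub>R e" _ 0 b1] by (simp add: add.commute)
  have I1: "(F has_integral integral (cbox 0 b \<inter> {x. t \<le> x \<bullet> e}) F)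
              (cbox (t *\<^sub>R e) (b + t *\<^sub>R e) \<inter> {x. x \<bullet> e \<le> 2*pi})"
    unfolding s1 using integrable_split(2)[OF int eB] by (simp add: integrable_integral)
  have "(F has_integral (integral (cbox 0 b \<inter> {x. t \<le> x \<bullet> e}) F + integral (cbox 0 b1) F))
          (cbox (t *\<^sub>R e) (b + t *\<^sub>R e))"
    by (rule has_integral_split[OF I1 _ eB]) (use I2 s2 in simp)
  then have J: "((F \<circ> (+) (t *\<^sub>R e)) has_integral
                  (integral (cbox 0 b \<inter> {x. t \<le> x \<bullet> e}) F + integral (cbox 0 b1) F)) (cbox 0 b)"
    using has_integral_shift_cbox_iff[of F "t *\<^sub>R e" _ 0 b] by (simp add: add.commute)
  have K: "(F has_integral (integral (cbox 0 b \<inter> {x. x \<bullet> e \<le> t}) F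
                             + integral (cbox 0 b \<inter> {x. t \<le> x \<bullet> e}) F)) (cbox 0 b)"
    by (rule has_integral_split[OF _ _ eB])
       (use integrable_split[OF int eB] in \<open>auto simp: integrable_integral\<close>)
  have "(\<lambda>x. F (x + t *\<^sub>R axis i 1)) = F \<circ> (+) (t *\<^sub>R e)"
    unfolding e_def by (auto simp: add.commute)
  then show ?thesis
    using integral_unique[OF J] integral_unique[OF K]
    unfolding torus_integral_def b_def[symmetric] s3 by (simp add: add.commute)
qed

lemma uniform_increment_approx:
  fixes F :: "real^'n::finite \<Rightarrow> complex"
  assumes dF: "axis_differentiable F" and cD: "continuous_on UNIV (pd i F)" and \<epsilon>: "\<epsilon> > 0"
  obtains t where "0 < t" "t \<le> 1"
    "\<And>x. x \<in> cbox 0 (\<chi> j. 2*pi) \<Longrightarrow> norm (F (x + t *\<^sub>R axis i 1) - F x - t *\<^sub>R pd i F x) \<le> t * \<epsilon>"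
proof -
  define K where "K = cbox (0::real^'n) (\<chi> j. 2*pi + 1)"
  have "uniformly_continuous_on K (pd i F)"
    unfolding K_def by (rule compact_uniformly_continuous[OF continuous_on_subset[OF cD]]) auto
  then obtain \<delta> where \<delta>: "\<delta> > 0"
    "\<And>x y. x \<in> K \<Longrightarrow> y \<in> K \<Longrightarrow> dist y x < \<delta> \<Longrightarrow> dist (pd i F y) (pd i F x) < \<epsilon>"
    unfolding uniformly_continuous_on_def using \<epsilon> by blast
  define t where "t = min (\<delta>/2) 1"
  have t: "0 < t" "t \<le> 1" "t < \<delta>" using \<delta> by (auto simp: t_def)
  have "norm (F (x + t *\<^sub>R axis i 1) - F x - t *\<^sub>R pd i F x) \<le> t * \<epsilon>"
    if x: "x \<in> cbox 0 (\<chi> j. 2*pi)" for x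
  proof -
    have "norm (F (x + t *\<^sub>R axis i 1) - F (x + 0 *\<^sub>R axis i 1) - t *\<^sub>R pd i F x) \<le> \<bar>t\<bar> * \<epsilon>"
    proof (rule increment_linearization_bound)
      fix \<sigma> assume "\<sigma> \<in> closed_segment 0 t"
      then have \<sigma>: "0 \<le> \<sigma>" "\<sigma> \<le> t" using t by (auto simp: closed_segment_eq_real_ivl)
      show "((\<lambda>\<sigma>. F (x + \<sigma> *\<^sub>R axis i 1)) has_vector_derivative pd i F (x + \<sigma> *\<^sub>R axis i 1)) (at \<sigma>)"
        by (rule axis_differentiable_has_vector_derivative[OF dF])
      have "x \<in> K" using x unfolding K_def mem_box_cart by (auto intro: order_trans)
      moreover have "x + \<sigma> *\<^sub>R axis i 1 \<in> K"
        unfolding K_def mem_box_cart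
      proof
        fix j
        have "0 \<le> x $ j" "x $ j \<le> 2*pi" using x by (auto simp: mem_box_cart)
        then show "0 $ j \<le> (x + \<sigma> *\<^sub>R axis i 1) $ j \<and> (x + \<sigma> *\<^sub>R axis i 1) $ j \<le> (\<chi> j. 2*pi + 1) $ j"
          using \<sigma> t by (auto simp: axis_def)
      qed
      moreover have "dist (x + \<sigma> *\<^sub>R axis i 1) x < \<delta>" using \<sigma> t by (simp add: dist_norm)
      ultimately show "norm (pd i F (x + \<sigma> *\<^sub>R axis i 1) - pd i F x) \<le> \<epsilon>"
        using \<delta>(2) by (fastforce simp: dist_norm)
    qed
    then show ?thesis using t by simp
  qed
  with t that show ?thesis by blast
qed

text \<open>By shift invariance the integral of \<open>F (x + t e\<^sub>i) - F x\<close> vanishes, while uniformly in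
  \<open>x\<close> this difference is \<open>t \<partial>\<^sub>i F x + o(t)\<close>.\<close>

lemma torus_integral_pd:
  fixes F :: "real^'n::finite \<Rightarrow> complex"
  assumes per: "periodic_torus F" and cF: "continuous_on UNIV F"
    and dF: "axis_differentiable F" and cD: "continuous_on UNIV (pd i F)"
  shows "torus_integral (pd i F) = 0"
proof -
  let ?T = "cbox 0 (\<chi> j::'n. 2*pi)" and ?V = "(2*pi) ^ CARD('n)"
  have "norm (torus_integral (pd i F)) \<le> 0 + e" if e: "e > 0" for e
  proof -
    obtain t where t: "0 < t" "t \<le> 1"
      and approx: "\<And>x. x \<in> ?T \<Longrightarrow> norm (F (x + t *\<^sub>R axis i 1) - F x - t *\<^sub>R pd i F x) \<le> t * (e / ?V)"
      using uniform_increment_approx[OF dF cD, of "e / ?V"] e by auto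
    have cFt: "continuous_on UNIV (\<lambda>x. F (x + t *\<^sub>R axis i 1))"
      by (rule continuous_on_compose2[OF cF]) (auto intro!: continuous_intros)
    have i1: "(\<lambda>x. F (x + t *\<^sub>R axis i 1)) integrable_on ?T"
      and i2: "F integrable_on ?T" and i3: "pd i F integrable_on ?T"
      using cFt cF cD by (auto intro: continuous_imp_integrable_on_cbox)
    have "torus_integral (\<lambda>x. F (x + t *\<^sub>R axis i 1) - F x - t *\<^sub>R pd i F x)
          = torus_integral (\<lambda>x. F (x + t *\<^sub>R axis i 1)) - torus_integral F - t *\<^sub>R torus_integral (pd i F)"
      unfolding torus_integral_def
      by (simp add: integral_diff[OF integrable_diff[OF i1 i2] integrable_cmul[OF i3]]
          integral_diff[OF i1 i2])
    also have "\<dots> = - (t *\<^sub>R torus_integral (pd i F))"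
      using torus_integral_shift[OF per cF] t pi_gt3 by simp
    finally have "t * norm (torus_integral (pd i F))
                  = norm (torus_integral (\<lambda>x. F (x + t *\<^sub>R axis i 1) - F x - t *\<^sub>R pd i F x))"
      using t by simp
    also have "\<dots> \<le> t * (e / ?V) * ?V"
      using cFt cF cD approx t e
      by (intro torus_integral_bound) (auto intro!: continuous_intros)
    also have "\<dots> = t * e" by simp
    finally show ?thesis using t by simp
  qed
  then show ?thesis using field_le_epsilon[of "norm (torus_integral (pd i F))" 0] by simp
qed

lemma torus_integral_pd_mult:
  assumes g: "smooth_periodic g" and h: "smooth_periodic h"
  shows "torus_integral (\<lambda>x. pd i g x * h x) = - torus_integral (\<lambda>x. g x * pd i h x)"
proof -
  have gh: "smooth_periodic (\<lambda>x. g x * h x)" using g h by (rule smooth_periodic_mult)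
  have "pd i (\<lambda>x. g x * h x) = (\<lambda>x. pd i g x * h x + g x * pd i h x)"
    using g h by (intro pd_mult smooth_fun_imp_axis_differentiable) (auto simp: smooth_periodic_def)
  moreover have "torus_integral (pd i (\<lambda>x. g x * h x)) = 0"
    using gh unfolding smooth_periodic_def
    by (intro torus_integral_pd smooth_fun_imp_continuous smooth_fun_imp_axis_differentiable smooth_fun_pd) auto
  ultimately have "torus_integral (\<lambda>x. pd i g x * h x) + torus_integral (\<lambda>x. g x * pd i h x) = 0"
    unfolding torus_integral_def using g h
    by (subst integral_add[symmetric])
       (auto intro!: smooth_periodic_integrable smooth_periodic_mult smooth_periodic_pd)
  then show ?thesis by (simp add: add_eq_0_iff)
qed

lemma torus_integral_pdl_mult:
  assumes "smooth_periodic g" "smooth_periodic h"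
  shows "torus_integral (\<lambda>x. pdl xs g x * h x)
         = (-1) ^ length xs * torus_integral (\<lambda>x. g x * pdl (rev xs) h x)"
  using assms(2)
proof (induction xs arbitrary: h)
  case (Cons i xs)
  have "torus_integral (\<lambda>x. pdl (i # xs) g x * h x) = - torus_integral (\<lambda>x. pdl xs g x * pd i h x)"
    using torus_integral_pd_mult[OF smooth_periodic_pdl[OF assms(1)] Cons.prems] by simp
  also have "\<dots> = - ((-1) ^ length xs * torus_integral (\<lambda>x. g x * pdl (rev xs @ [i]) h x))"
    using Cons.IH[OF smooth_periodic_pd[OF Cons.prems]] by (simp add: pdl_append)
  finally show ?case by simp
qed simp

lemma torus_integral_Dm_mult:
  assumes g: "smooth_periodic g" and h: "smooth_periodic h"
  shows "torus_integral (\<lambda>x. Dm \<alpha> g x * h x) = (-1) ^ mlen \<alpha> * torus_integral (\<lambda>x. g x * Dm \<alpha> h x)"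
proof -
  have "pdl (rev (index_list \<alpha>)) h = pdl (index_list \<alpha>) h"
    using h unfolding smooth_periodic_def by (intro pdl_perm) auto
  then show ?thesis
    unfolding Dm_eq_pdl_index_list using torus_integral_pdl_mult[OF g h, of "index_list \<alpha>"]
    by (simp add: length_index_list)
qed

lemma torus_integral_Lop_mult:
  fixes a :: "('n::finite \<Rightarrow> nat) \<Rightarrow> real^'n \<Rightarrow> complex"
  assumes u: "smooth_periodic u" and v: "smooth_periodic v"
    and a: "\<And>\<alpha>. mlen \<alpha> \<le> m \<Longrightarrow> smooth_periodic (a \<alpha>)"
  shows "torus_integral (\<lambda>x. Lop m a u x * v x) = torus_integral (\<lambda>x. u x * tLop m a v x)"
proof -
  define A where "A = {\<alpha>::'n \<Rightarrow> nat. mlen \<alpha> \<le> m}"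
  have A: "finite A" unfolding A_def by (rule finite_mlen_le)
  have av: "smooth_periodic (\<lambda>y. a \<alpha> y * v y)" if "\<alpha> \<in> A" for \<alpha>
    using that a v by (auto simp: A_def intro: smooth_periodic_mult)
  have "torus_integral (\<lambda>x. Lop m a u x * v x) = torus_integral (\<lambda>x. \<Sum>\<alpha>\<in>A. Dm \<alpha> u x * (a \<alpha> x * v x))"
    unfolding Lop_def A_def by (simp add: sum_distrib_left sum_distrib_right mult_ac)
  also have "\<dots> = (\<Sum>\<alpha>\<in>A. torus_integral (\<lambda>x. Dm \<alpha> u x * (a \<alpha> x * v x)))"
    unfolding torus_integral_def using u v a
    by (intro integral_sum A)
       (auto simp: A_def intro!: smooth_periodic_integrable smooth_periodic_mult smooth_periodic_Dm)
  also have "\<dots> = (\<Sum>\<alpha>\<in>A. (-1) ^ mlen \<alpha> * torus_integral (\<lambda>x. u x * Dm \<alpha> (\<lambda>y. a \<alpha> y * v y) x))"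
    by (intro sum.cong refl torus_integral_Dm_mult[OF u av])
  also have "\<dots> = (\<Sum>\<alpha>\<in>A. torus_integral (\<lambda>x. (-1) ^ mlen \<alpha> * (u x * Dm \<alpha> (\<lambda>y. a \<alpha> y * v y) x)))"
    by (simp add: torus_integral_def)
  also have "\<dots> = torus_integral (\<lambda>x. \<Sum>\<alpha>\<in>A. (-1) ^ mlen \<alpha> * (u x * Dm \<alpha> (\<lambda>y. a \<alpha> y * v y) x))"
    unfolding torus_integral_def using u v a
    by (intro integral_sum[symmetric] A)
       (auto simp: A_def intro!: smooth_periodic_integrable smooth_periodic_mult smooth_periodic_Dm smooth_periodic_cmult)
  also have "\<dots> = torus_integral (\<lambda>x. u x * tLop m a v x)"
    unfolding tLop_def A_def by (simp add: sum_distrib_left mult_ac)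
  finally show ?thesis .
qed

section \<open>The weighted norms\<close>

definition wnorm_weight :: "(real \<Rightarrow> real) \<Rightarrow> real \<Rightarrow> ('n::finite \<Rightarrow> nat) \<Rightarrow> real" where
  "wnorm_weight \<omega> lam \<alpha> = exp (- lam * phistar \<omega> (real (mlen \<alpha>) / lam))"

definition wnorm_real :: "(real \<Rightarrow> real) \<Rightarrow> real \<Rightarrow> (real^'n::finite \<Rightarrow> complex) \<Rightarrow> real" where
  "wnorm_real \<omega> lam f = real_of_ereal (wnorm \<omega> lam f)"

lemma wnorm_weight_pos: "0 < wnorm_weight \<omega> lam \<alpha>"
  unfolding wnorm_weight_def by simp

lemma wnorm_upper: "ereal (cmod (Dm \<alpha> f x) * wnorm_weight \<omega> lam \<alpha>) \<le> wnorm \<omega> lam f"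
  unfolding wnorm_def wnorm_weight_def
  by (rule SUP_upper2[where i=x, OF UNIV_I], rule SUP_upper2[where i=\<alpha>, OF UNIV_I]) simp

lemma wnorm_nonneg: "0 \<le> wnorm \<omega> lam f"
proof -
  have "ereal 0 \<le> ereal (cmod (Dm \<alpha> f x) * wnorm_weight \<omega> lam \<alpha>)" for \<alpha> x
    using wnorm_weight_pos[of \<omega> lam \<alpha>] by simp
  then show ?thesis using wnorm_upper order_trans zero_ereal_def by metis
qed

lemma wnorm_real_nonneg: "0 \<le> wnorm_real \<omega> lam f"
  unfolding wnorm_real_def using wnorm_nonneg[of \<omega> lam f] by (simp add: real_of_ereal_pos)

lemma wnorm_eq_wnorm_real: "wnorm \<omega> lam f < \<infinity> \<Longrightarrow> wnorm \<omega> lam f = ereal (wnorm_real \<omega> lam f)"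
  unfolding wnorm_real_def using wnorm_nonneg[of \<omega> lam f] by (cases "wnorm \<omega> lam f") auto

lemma wnorm_real_upper:
  "wnorm \<omega> lam f < \<infinity> \<Longrightarrow> cmod (Dm \<alpha> f x) * wnorm_weight \<omega> lam \<alpha> \<le> wnorm_real \<omega> lam f"
  using wnorm_upper[of \<alpha> f x \<omega> lam] wnorm_eq_wnorm_real[of \<omega> lam f] by simp

lemma wnorm_least:
  assumes "\<And>x \<alpha>. cmod (Dm \<alpha> f x) * wnorm_weight \<omega> lam \<alpha> \<le> B"
  shows "wnorm \<omega> lam f < \<infinity>" "wnorm_real \<omega> lam f \<le> B"
proof -
  have le: "wnorm \<omega> lam f \<le> ereal B"
    unfolding wnorm_def using assms by (intro SUP_least) (simp add: wnorm_weight_def)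
  then show "wnorm \<omega> lam f < \<infinity>" by (cases "wnorm \<omega> lam f") auto
  with le show "wnorm_real \<omega> lam f \<le> B" using wnorm_eq_wnorm_real[of \<omega> lam f] by simp
qed

lemma norm_le_wnorm_real:
  fixes f :: "real^'n::finite \<Rightarrow> complex"
  assumes "wnorm \<omega> lam f < \<infinity>"
  shows "cmod (f x) \<le> wnorm_real \<omega> lam f / wnorm_weight \<omega> lam (\<lambda>i::'n. 0)"
  using wnorm_real_upper[OF assms, of "\<lambda>i. 0" x]
  by (simp add: Dm_zero pos_le_divide_eq[OF wnorm_weight_pos])

lemma Eh_iff: "f \<in> Eh \<omega> h \<longleftrightarrow> smooth_periodic f \<and> wnorm \<omega> (1/h) f < \<infinity>"
  unfolding Eh_def smooth_periodic_def by auto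

lemma Eh_subset_Eom: "h > 0 \<Longrightarrow> Eh \<omega> h \<subseteq> Eom \<omega>"
  unfolding Eom_def by auto

lemma Eom_imp_smooth_periodic: "f \<in> Eom \<omega> \<Longrightarrow> smooth_periodic f"
  by (auto simp: Eom_def Eh_iff)

lemma Eom_bounded:
  fixes f :: "real^'n::finite \<Rightarrow> complex"
  assumes "f \<in> Eom \<omega>"
  obtains B where "0 \<le> B" "\<And>x. cmod (f x) \<le> B"
proof -
  obtain h where "h > 0" "f \<in> Eh \<omega> h" using assms unfolding Eom_def by auto
  then have "cmod (f x) \<le> wnorm_real \<omega> (1/h) f / wnorm_weight \<omega> (1/h) (\<lambda>i::'n. 0)" for x
    by (intro norm_le_wnorm_real) (simp add: Eh_iff)
  moreover have "0 \<le> wnorm_real \<omega> (1/h) f / wnorm_weight \<omega> (1/h) (\<lambda>i::'n. 0)"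
    using wnorm_real_nonneg wnorm_weight_pos by (intro divide_nonneg_pos)
  ultimately show ?thesis using that by blast
qed

lemma
  assumes f: "f \<in> Eh \<omega> h" and g: "g \<in> Eh \<omega> h"
  shows Eh_add: "(\<lambda>x. f x + g x) \<in> Eh \<omega> h"
    and wnorm_real_add_le: "wnorm_real \<omega> (1/h) (\<lambda>x. f x + g x) \<le> wnorm_real \<omega> (1/h) f + wnorm_real \<omega> (1/h) g"
proof -
  have "cmod (Dm \<alpha> (\<lambda>x. f x + g x) x) * wnorm_weight \<omega> (1/h) \<alpha>
        \<le> wnorm_real \<omega> (1/h) f + wnorm_real \<omega> (1/h) g" for \<alpha> x
  proof -
    have "Dm \<alpha> (\<lambda>x. f x + g x) x = Dm \<alpha> f x + Dm \<alpha> g x"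
      using f g by (simp add: Eh_iff smooth_periodic_def Dm_add)
    then have "cmod (Dm \<alpha> (\<lambda>x. f x + g x) x) * wnorm_weight \<omega> (1/h) \<alpha>
               \<le> cmod (Dm \<alpha> f x) * wnorm_weight \<omega> (1/h) \<alpha> + cmod (Dm \<alpha> g x) * wnorm_weight \<omega> (1/h) \<alpha>"
      using wnorm_weight_pos[of \<omega> "1/h" \<alpha>]
      by (simp add: distrib_right[symmetric] mult_right_mono norm_triangle_ineq)
    also have "\<dots> \<le> wnorm_real \<omega> (1/h) f + wnorm_real \<omega> (1/h) g"
      using f g unfolding Eh_iff by (intro add_mono wnorm_real_upper) auto
    finally show ?thesis .
  qed
  note bound = wnorm_least[OF this]
  show "(\<lambda>x. f x + g x) \<in> Eh \<omega> h"
    using f g bound(1) by (simp add: Eh_iff smooth_periodic_add)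
  show "wnorm_real \<omega> (1/h) (\<lambda>x. f x + g x) \<le> wnorm_real \<omega> (1/h) f + wnorm_real \<omega> (1/h) g"
    by (rule bound(2))
qed

lemma
  assumes f: "f \<in> Eh \<omega> h"
  shows Eh_cmult: "(\<lambda>x. c * f x) \<in> Eh \<omega> h"
    and wnorm_real_cmult_le: "wnorm_real \<omega> (1/h) (\<lambda>x. c * f x) \<le> cmod c * wnorm_real \<omega> (1/h) f"
proof -
  have "cmod (Dm \<alpha> (\<lambda>x. c * f x) x) * wnorm_weight \<omega> (1/h) \<alpha> \<le> cmod c * wnorm_real \<omega> (1/h) f"
    for \<alpha> x
  proof -
    have "cmod (Dm \<alpha> (\<lambda>x. c * f x) x) * wnorm_weight \<omega> (1/h) \<alpha>
          = cmod c * (cmod (Dm \<alpha> f x) * wnorm_weight \<omega> (1/h) \<alpha>)"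
      using f by (simp add: Eh_iff smooth_periodic_def Dm_cmult norm_mult)
    also have "\<dots> \<le> cmod c * wnorm_real \<omega> (1/h) f"
      using f unfolding Eh_iff by (intro mult_left_mono wnorm_real_upper) auto
    finally show ?thesis .
  qed
  note bound = wnorm_least[OF this]
  show "(\<lambda>x. c * f x) \<in> Eh \<omega> h"
    using f bound(1) by (simp add: Eh_iff smooth_periodic_cmult)
  show "wnorm_real \<omega> (1/h) (\<lambda>x. c * f x) \<le> cmod c * wnorm_real \<omega> (1/h) f"
    by (rule bound(2))
qed

lemma Eh_diff: "f \<in> Eh \<omega> h \<Longrightarrow> g \<in> Eh \<omega> h \<Longrightarrow> (\<lambda>x. f x - g x) \<in> Eh \<omega> h"
  using Eh_add[OF _ Eh_cmult, of f \<omega> h g "-1"] by simp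

lemma wnorm_real_diff_commute:
  assumes "f \<in> Eh \<omega> h" "g \<in> Eh \<omega> h"
  shows "wnorm_real \<omega> (1/h) (\<lambda>x. f x - g x) = wnorm_real \<omega> (1/h) (\<lambda>x. g x - f x)"
proof -
  have le: "wnorm_real \<omega> (1/h) (\<lambda>x. q x - p x) \<le> wnorm_real \<omega> (1/h) (\<lambda>x. p x - q x)"
    if "p \<in> Eh \<omega> h" "q \<in> Eh \<omega> h" for p q
    using wnorm_real_cmult_le[OF Eh_diff[OF that], of "-1"] by simp
  show ?thesis using le[OF assms] le[OF assms(2,1)] by linarith
qed

lemma
  fixes \<omega> :: "real \<Rightarrow> real"
  shows Eh_zero: "(\<lambda>x::real^'n::finite. 0) \<in> Eh \<omega> h"
    and wnorm_real_zero: "wnorm_real \<omega> lam (\<lambda>x::real^'n::finite. 0) = 0"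
proof -
  have "cmod (Dm \<alpha> (\<lambda>x::real^'n. 0) x) * wnorm_weight \<omega> l \<alpha> \<le> 0" for \<alpha> x l
    by (simp add: Dm_const_zero)
  note bound = wnorm_least[OF this]
  show "(\<lambda>x::real^'n. 0) \<in> Eh \<omega> h" using bound(1) by (simp add: Eh_iff smooth_periodic_const)
  show "wnorm_real \<omega> lam (\<lambda>x::real^'n. 0) = 0"
    by (intro order_antisym bound(2) wnorm_real_nonneg)
qed

lemma wnorm_real_eq_0_imp:
  assumes "f \<in> Eh \<omega> h" "wnorm_real \<omega> (1/h) f = 0"
  shows "f x = 0"
  using norm_le_wnorm_real[of \<omega> "1/h" f x] assms by (simp add: Eh_iff)

section \<open>Completeness of the steps of the inductive limit\<close>

lemma Dm_diff_le_wnorm_real: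
  assumes "f \<in> Eh \<omega> h" "g \<in> Eh \<omega> h"
  shows "cmod (Dm \<alpha> f x - Dm \<alpha> g x) * wnorm_weight \<omega> (1/h) \<alpha> \<le> wnorm_real \<omega> (1/h) (\<lambda>x. f x - g x)"
proof -
  have "Dm \<alpha> f x - Dm \<alpha> g x = Dm \<alpha> (\<lambda>x. f x - g x) x"
    using assms by (simp add: Eh_iff smooth_periodic_def Dm_diff)
  moreover have "wnorm \<omega> (1/h) (\<lambda>x. f x - g x) < \<infinity>" using Eh_diff[OF assms] by (simp add: Eh_iff)
  ultimately show ?thesis using wnorm_real_upper by metis
qed

lemma uniformly_Cauchy_on_pdl:
  assumes F: "\<And>n. F n \<in> Eh \<omega> h"
    and Cauchy: "\<And>\<epsilon>. \<epsilon> > 0 \<Longrightarrow> \<exists>N. \<forall>n\<ge>N. \<forall>n'\<ge>N. wnorm_real \<omega> (1/h) (\<lambda>x. F n x - F n' x) < \<epsilon>"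
  shows "uniformly_Cauchy_on UNIV (\<lambda>n. pdl xs (F n))"
proof (rule uniformly_Cauchy_onI)
  fix \<epsilon> :: real assume \<epsilon>: "\<epsilon> > 0"
  define w where "w = wnorm_weight \<omega> (1/h) (count_list xs)"
  have w: "w > 0" unfolding w_def by (rule wnorm_weight_pos)
  obtain N where N: "\<And>n n'. n \<ge> N \<Longrightarrow> n' \<ge> N \<Longrightarrow> wnorm_real \<omega> (1/h) (\<lambda>x. F n x - F n' x) < \<epsilon> * w"
    using Cauchy[of "\<epsilon> * w"] \<epsilon> w by auto
  have "dist (pdl xs (F n) x) (pdl xs (F n') x) < \<epsilon>" if "n \<ge> N" "n' \<ge> N" for n n' x
  proof -
    have "smooth_fun (F k)" for k using F by (simp add: Eh_iff smooth_periodic_def)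
    then have "dist (pdl xs (F n) x) (pdl xs (F n') x) * w \<le> wnorm_real \<omega> (1/h) (\<lambda>x. F n x - F n' x)"
      using Dm_diff_le_wnorm_real[OF F F] by (simp add: pdl_eq_Dm dist_norm w_def)
    with N[OF that] have "dist (pdl xs (F n) x) (pdl xs (F n') x) * w < \<epsilon> * w" by linarith
    with w show ?thesis by simp
  qed
  then show "\<exists>M. \<forall>x\<in>UNIV. \<forall>m\<ge>M. \<forall>n\<ge>M. dist (pdl xs (F m) x) (pdl xs (F n) x) < \<epsilon>" by blast
qed

lemma axis_derivative_uniform_limit:
  fixes f :: "nat \<Rightarrow> real^'n::finite \<Rightarrow> complex"
  assumes diff: "\<And>n. axis_differentiable (f n)"
    and conv: "\<And>x. (\<lambda>n. f n x) \<longlonglongrightarrow> g x"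
    and lim: "uniform_limit UNIV (\<lambda>n. pd i (f n)) g' sequentially"
  shows "((\<lambda>t. g (x + t *\<^sub>R axis i 1)) has_vector_derivative g' x) (at 0)"
proof -
  have "\<exists>\<phi>. \<forall>t\<in>UNIV. (\<lambda>n. f n (x + t *\<^sub>R axis i 1)) \<longlonglongrightarrow> \<phi> t \<and>
          (\<phi> has_derivative (\<lambda>s. s *\<^sub>R g' (x + t *\<^sub>R axis i 1))) (at t within UNIV)"
  proof (rule has_derivative_sequence[where f'="\<lambda>n t s. s *\<^sub>R pd i (f n) (x + t *\<^sub>R axis i 1)"])
    fix n and t :: real
    from axis_differentiable_has_vector_derivative[OF diff]
    show "((\<lambda>t. f n (x + t *\<^sub>R axis i 1)) has_derivative
            (\<lambda>s. s *\<^sub>R pd i (f n) (x + t *\<^sub>R axis i 1))) (at t within UNIV)"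
      by (simp add: has_vector_derivative_def)
  next
    fix e :: real assume "e > 0"
    then have "\<forall>\<^sub>F n in sequentially. \<forall>y. dist (pd i (f n) y) (g' y) < e"
      using lim unfolding uniform_limit_iff by simp
    then show "\<forall>\<^sub>F n in sequentially. \<forall>t\<in>UNIV. \<forall>s. norm (s *\<^sub>R pd i (f n) (x + t *\<^sub>R axis i 1)
                 - s *\<^sub>R g' (x + t *\<^sub>R axis i 1)) \<le> e * norm s"
    proof (rule eventually_mono, intro ballI allI)
      fix n t s assume "\<forall>y. dist (pd i (f n) y) (g' y) < e"
      then have "norm (pd i (f n) (x + t *\<^sub>R axis i 1) - g' (x + t *\<^sub>R axis i 1)) \<le> e"
        by (simp add: dist_norm less_imp_le)
      from mult_left_mono[OF this, of "\<bar>s\<bar>"]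
      show "norm (s *\<^sub>R pd i (f n) (x + t *\<^sub>R axis i 1) - s *\<^sub>R g' (x + t *\<^sub>R axis i 1)) \<le> e * norm s"
        by (simp add: mult.commute flip: scaleR_diff_right)
    qed
  next
    show "(\<lambda>n. f n (x + 0 *\<^sub>R axis i 1)) \<longlonglongrightarrow> g x" using conv by simp
  qed auto
  then obtain \<phi> where \<phi>: "\<And>t. (\<lambda>n. f n (x + t *\<^sub>R axis i 1)) \<longlonglongrightarrow> \<phi> t"
      "\<And>t. (\<phi> has_derivative (\<lambda>s. s *\<^sub>R g' (x + t *\<^sub>R axis i 1))) (at t)"
    by auto
  have "\<phi> = (\<lambda>t. g (x + t *\<^sub>R axis i 1))" using LIMSEQ_unique[OF \<phi>(1) conv] by auto
  with \<phi>(2)[of 0] show ?thesis by (simp add: has_vector_derivative_def)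
qed

lemma smooth_fun_uniform_limit:
  fixes F :: "nat \<Rightarrow> real^'n::finite \<Rightarrow> complex"
  assumes smooth: "\<And>n. smooth_fun (F n)"
    and lim: "\<And>xs. uniform_limit UNIV (\<lambda>n. pdl xs (F n)) (G xs) sequentially"
  shows "smooth_fun (G [])" and "pdl xs (G []) = G xs"
proof -
  have deriv: "((\<lambda>t. G xs (x + t *\<^sub>R axis i 1)) has_vector_derivative G (i # xs) x) (at 0)" for xs i x
  proof (rule axis_derivative_uniform_limit)
    show "axis_differentiable (pdl xs (F n))" for n using smooth by (simp add: smooth_fun_iff)
    show "(\<lambda>n. pdl xs (F n) y) \<longlonglongrightarrow> G xs y" for y using tendsto_uniform_limitI[OF lim] by simp
    show "uniform_limit UNIV (\<lambda>n. pd i (pdl xs (F n))) (G (i # xs)) sequentially"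
      using lim[of "i # xs"] by simp
  qed
  have pd: "pd i (G xs) = G (i # xs)" for i xs
    by (rule pd_eqI) (rule deriv)
  show pdl: "pdl xs (G []) = G xs" for xs
    by (induction xs) (simp_all add: pd)
  have "continuous_on UNIV (G xs)" for xs
    using smooth by (intro uniform_limit_theorem[OF _ lim]) (simp_all add: smooth_fun_iff)
  with deriv show "smooth_fun (G [])"
    unfolding smooth_fun_iff pdl axis_differentiable_def pd by blast
qed

lemma Eh_complete:
  fixes F :: "nat \<Rightarrow> real^'n::finite \<Rightarrow> complex"
  assumes F: "\<And>n. F n \<in> Eh \<omega> h"
    and Cauchy: "\<And>\<epsilon>. \<epsilon> > 0 \<Longrightarrow> \<exists>N. \<forall>n\<ge>N. \<forall>n'\<ge>N. wnorm_real \<omega> (1/h) (\<lambda>x. F n x - F n' x) < \<epsilon>"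
  obtains f where "f \<in> Eh \<omega> h"
    and "\<And>\<epsilon>. \<epsilon> > 0 \<Longrightarrow> \<exists>N. \<forall>n\<ge>N. wnorm_real \<omega> (1/h) (\<lambda>x. F n x - f x) \<le> \<epsilon>"
proof -
  define G where "G xs x = lim (\<lambda>n. pdl xs (F n) x)" for xs x
  have lim: "uniform_limit UNIV (\<lambda>n. pdl xs (F n)) (G xs) sequentially" for xs
    using Cauchy_uniformly_convergent[OF uniformly_Cauchy_on_pdl[OF F Cauchy]]
    unfolding uniformly_convergent_uniform_limit_iff G_def .
  have smooth: "smooth_fun (F n)" for n using F by (simp add: Eh_iff smooth_periodic_def)
  define f where "f = G []"
  have pdl_f: "pdl xs f = G xs" for xs
    unfolding f_def by (rule smooth_fun_uniform_limit(2)[OF smooth lim])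
  have "periodic_torus (F n)" for n using F by (simp add: Eh_iff smooth_periodic_def)
  then have "smooth_periodic f"
    using smooth_fun_uniform_limit(1)[OF smooth lim]
    by (simp add: smooth_periodic_def periodic_torus_def f_def G_def)
  have approx: "\<exists>N. \<forall>n\<ge>N. (\<lambda>x. F n x - f x) \<in> Eh \<omega> h \<and> wnorm_real \<omega> (1/h) (\<lambda>x. F n x - f x) \<le> \<epsilon>"
    if \<epsilon>: "\<epsilon> > 0" for \<epsilon>
  proof -
    obtain N where N: "\<And>n k. n \<ge> N \<Longrightarrow> k \<ge> N \<Longrightarrow> wnorm_real \<omega> (1/h) (\<lambda>x. F n x - F k x) < \<epsilon>"
      using Cauchy[OF \<epsilon>] by auto
    have "cmod (Dm \<alpha> (\<lambda>x. F n x - f x) x) * wnorm_weight \<omega> (1/h) \<alpha> \<le> \<epsilon>" if n: "n \<ge> N" for n \<alpha> x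
    proof (rule LIMSEQ_le_const2)
      have eq: "Dm \<alpha> (\<lambda>x. F n x - f x) x = Dm \<alpha> (F n) x - G (index_list \<alpha>) x"
        using \<open>smooth_periodic f\<close> smooth
        by (simp add: smooth_periodic_def Dm_diff) (simp add: Dm_eq_pdl_index_list pdl_f)
      show "(\<lambda>k. cmod (Dm \<alpha> (F n) x - Dm \<alpha> (F k) x) * wnorm_weight \<omega> (1/h) \<alpha>)
              \<longlonglongrightarrow> cmod (Dm \<alpha> (\<lambda>x. F n x - f x) x) * wnorm_weight \<omega> (1/h) \<alpha>"
        unfolding eq by (intro tendsto_intros) (simp add: Dm_eq_pdl_index_list tendsto_uniform_limitI[OF lim])
      show "\<exists>M. \<forall>k\<ge>M. cmod (Dm \<alpha> (F n) x - Dm \<alpha> (F k) x) * wnorm_weight \<omega> (1/h) \<alpha> \<le> \<epsilon>"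
        using order_trans[OF Dm_diff_le_wnorm_real[OF F F] less_imp_le[OF N[OF n]]] by blast
    qed
    then have "wnorm \<omega> (1/h) (\<lambda>x. F n x - f x) < \<infinity> \<and> wnorm_real \<omega> (1/h) (\<lambda>x. F n x - f x) \<le> \<epsilon>"
      if "n \<ge> N" for n
      using wnorm_least[of "\<lambda>x. F n x - f x"] that by blast
    moreover have "smooth_periodic (\<lambda>x. F n x - f x)" for n
      using F \<open>smooth_periodic f\<close> by (simp add: Eh_iff smooth_periodic_diff)
    ultimately show ?thesis by (auto simp: Eh_iff)
  qed
  obtain N where "(\<lambda>x. F N x - f x) \<in> Eh \<omega> h" using approx[of 1] by auto
  from Eh_diff[OF F[of N] this] have "f \<in> Eh \<omega> h" by simp
  with approx that show ?thesis by meson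
qed

section \<open>The uniform boundedness principle\<close>

lemma (in Metric_space) closedin_Lipschitz_sublevel:
  assumes Lip: "\<And>i x y. i \<in> I \<Longrightarrow> x \<in> M \<Longrightarrow> y \<in> M \<Longrightarrow> F i x - F i y \<le> c i * d x y"
  shows "closedin mtopology {x \<in> M. \<forall>i\<in>I. F i x \<le> b i}"
  unfolding closedin_metric
proof (intro conjI allI impI)
  fix x assume "x \<in> M - {x \<in> M. \<forall>i\<in>I. F i x \<le> b i}"
  then obtain i where x: "x \<in> M" and i: "i \<in> I" "b i < F i x" by auto
  define r where "r = (F i x - b i) / (\<bar>c i\<bar> + 1)"
  have c1: "\<bar>c i\<bar> + 1 > 0" by (simp add: add_nonneg_pos)
  have r: "r > 0" using i c1 by (simp add: r_def)
  have "b i < F i y" if "y \<in> mball x r" for y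
  proof -
    have y: "y \<in> M" "d x y < r" using that by auto
    have "F i x - F i y \<le> \<bar>c i\<bar> * d x y"
      using Lip[OF i(1) x y(1)] by (meson abs_ge_self mult_right_mono nonneg order_trans)
    also have "\<dots> \<le> \<bar>c i\<bar> * r" using y by (simp add: mult_left_mono)
    also have "\<dots> < F i x - b i"
      using r c1 by (simp add: r_def field_simps)
    finally show ?thesis by simp
  qed
  then show "\<exists>r>0. disjnt {x \<in> M. \<forall>i\<in>I. F i x \<le> b i} (mball x r)"
    using r i by (force simp: disjnt_def)
qed auto

lemma (in Metric_space) Baire_closed_cover_contains_ball:
  assumes "mcomplete" "M \<noteq> {}"
    and closed: "\<And>n::nat. closedin mtopology (A n)" and cover: "\<Union>(range A) = M"
  obtains n x r where "x \<in> M" "r > 0" "mball x r \<subseteq> A n"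
proof -
  have "\<exists>n. mtopology interior_of A n \<noteq> {}"
  proof (rule ccontr)
    assume "\<nexists>n. mtopology interior_of A n \<noteq> {}"
    then have "mtopology interior_of \<Union>(range A) = {}"
      using closed by (intro metric_Baire_category_alt[OF \<open>mcomplete\<close>]) auto
    with cover \<open>M \<noteq> {}\<close> show False using interior_of_topspace[of mtopology] by simp
  qed
  then obtain n x where x: "x \<in> mtopology interior_of A n" by blast
  then obtain r where "r > 0" "mball x r \<subseteq> mtopology interior_of A n"
    using openin_interior_of openin_mtopology by blast
  moreover have "x \<in> M" using x interior_of_subset_topspace by fastforce
  ultimately show ?thesis using that interior_of_subset[of mtopology "A n"] by blast
qed

lemma linear_functional_bound_from_ball:
  fixes T :: "('x \<Rightarrow> complex) \<Rightarrow> complex"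
  assumes lin: "\<And>c. T (\<lambda>x. f0 x + c * f x) = T f0 + c * T f"
    and ball: "\<And>c. cmod c * Nf < r \<Longrightarrow> cmod (T (\<lambda>x. f0 x + c * f x)) \<le> K"
    and r: "0 < r" and Nf: "0 < Nf"
  shows "cmod (T f) \<le> 4 * K / r * Nf"
proof -
  define s where "s = r / (2 * Nf)"
  have s: "s > 0" "s * Nf < r" using r Nf by (simp_all add: s_def)
  have "cmod (T f0 + s * T f) \<le> K" using ball[of s] lin[of s] s by simp
  moreover have "cmod (T f0) \<le> K" using ball[of 0] lin[of 0] r by simp
  ultimately have "s * cmod (T f) \<le> 2 * K"
    using norm_triangle_ineq4[of "T f0 + s * T f" "T f0"] s by (simp add: norm_mult)
  then show ?thesis using s r Nf by (simp add: s_def field_simps)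
qed

locale functionals_on_complete_space = Metric_space P d
  for P :: "('x \<Rightarrow> complex) set" and d +
  fixes N :: "('x \<Rightarrow> complex) \<Rightarrow> real" and I :: "'v set"
    and T :: "'v \<Rightarrow> ('x \<Rightarrow> complex) \<Rightarrow> complex"
  assumes complete: "mcomplete"
    and dist_eq: "\<And>f g. f \<in> P \<Longrightarrow> g \<in> P \<Longrightarrow> d f g = N (\<lambda>x. f x - g x)"
    and nonempty: "P \<noteq> {}"
    and lincomb_closed: "\<And>f g c. f \<in> P \<Longrightarrow> g \<in> P \<Longrightarrow> (\<lambda>x. f x + c * g x) \<in> P"
    and N_cmult: "\<And>f c. f \<in> P \<Longrightarrow> N (\<lambda>x. c * f x) \<le> cmod c * N f"
    and T_lincomb: "\<And>v f g c. v \<in> I \<Longrightarrow> f \<in> P \<Longrightarrow> g \<in> P \<Longrightarrow>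
                      T v (\<lambda>x. f x + c * g x) = T v f + c * T v g"
    and T_bounded: "\<And>v. v \<in> I \<Longrightarrow> \<exists>c. \<forall>f\<in>P. cmod (T v f) \<le> c * N f"
begin

lemma N_nonneg: "f \<in> P \<Longrightarrow> 0 \<le> N f"
  using dist_eq[of f "\<lambda>x. 0"] lincomb_closed[of f f "-1"] nonneg[of f "\<lambda>x. 0"] by simp

lemma closedin_T_sublevel: "closedin mtopology {f \<in> P. \<forall>v\<in>I. cmod (T v f) \<le> b v}"
proof -
  obtain c where c: "\<And>v f. v \<in> I \<Longrightarrow> f \<in> P \<Longrightarrow> cmod (T v f) \<le> c v * N f"
    using T_bounded by metis
  show ?thesis
  proof (rule closedin_Lipschitz_sublevel)
    fix v f g assume vfg: "v \<in> I" "f \<in> P" "g \<in> P"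
    have "cmod (T v f) - cmod (T v g) \<le> cmod (T v (\<lambda>x. f x + (-1) * g x))"
      using T_lincomb[OF vfg, of "-1"] norm_triangle_ineq2[of "T v f" "T v g"] by simp
    also have "\<dots> \<le> c v * d f g"
      using c[OF vfg(1) lincomb_closed[OF vfg(2,3), of "-1"]] dist_eq[OF vfg(2,3)] by simp
    finally show "cmod (T v f) - cmod (T v g) \<le> c v * d f g" .
  qed
qed

lemma pointwise_bounded_imp_bounded_on_ball:
  assumes pointwise: "\<And>f. f \<in> P \<Longrightarrow> \<exists>B. \<forall>v\<in>I. cmod (T v f) \<le> B * M v"
    and M_nonneg: "\<And>v. v \<in> I \<Longrightarrow> 0 \<le> M v"
  shows "\<exists>f0\<in>P. \<exists>r>0. \<exists>n::nat. \<forall>g\<in>mball f0 r. \<forall>v\<in>I. cmod (T v g) \<le> real n * M v"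
proof -
  define A where "A n = {f \<in> P. \<forall>v\<in>I. cmod (T v f) \<le> real n * M v}" for n :: nat
  have closed: "closedin mtopology (A n)" for n
    unfolding A_def by (rule closedin_T_sublevel)
  have cover: "\<Union>(range A) = P"
  proof (intro subset_antisym subsetI)
    fix f assume f: "f \<in> P"
    then obtain B where B: "\<forall>v\<in>I. cmod (T v f) \<le> B * M v" using pointwise by blast
    have "B * M v \<le> real (nat \<lceil>B\<rceil>) * M v" if "v \<in> I" for v
      using M_nonneg[OF that] by (intro mult_right_mono) linarith+
    with B f have "f \<in> A (nat \<lceil>B\<rceil>)" by (force simp: A_def)
    then show "f \<in> \<Union>(range A)" by blast
  qed (auto simp: A_def)
  obtain n f0 r where f0: "f0 \<in> P" and r: "r > 0" and ball: "mball f0 r \<subseteq> A n"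
    by (rule Baire_closed_cover_contains_ball[OF complete nonempty closed cover])
  show ?thesis
  proof (intro bexI[OF _ f0] exI[of _ r] exI[of _ n] conjI r ballI)
    fix g v assume "g \<in> mball f0 r" "v \<in> I"
    moreover from \<open>g \<in> mball f0 r\<close> ball have "g \<in> A n" by blast
    ultimately show "cmod (T v g) \<le> real n * M v" by (simp add: A_def)
  qed
qed

theorem uniform_boundedness:
  assumes pointwise: "\<And>f. f \<in> P \<Longrightarrow> \<exists>B. \<forall>v\<in>I. cmod (T v f) \<le> B * M v"
    and M_nonneg: "\<And>v. v \<in> I \<Longrightarrow> 0 \<le> M v"
  shows "\<exists>C>0. \<forall>f\<in>P. \<forall>v\<in>I. cmod (T v f) \<le> C * N f * M v"
proof -
  obtain f0 r n where f0: "f0 \<in> P" and r: "r > 0"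
    and ball: "\<And>g v. g \<in> mball f0 r \<Longrightarrow> v \<in> I \<Longrightarrow> cmod (T v g) \<le> real n * M v"
    using pointwise_bounded_imp_bounded_on_ball[OF pointwise M_nonneg] by blast
  define C where "C = 4 * real n / r + 1"
  have "cmod (T v f) \<le> C * N f * M v" if f: "f \<in> P" and v: "v \<in> I" for f v
  proof (cases "N f = 0")
    case True
    obtain c where "\<forall>g\<in>P. cmod (T v g) \<le> c * N g" using T_bounded[OF v] ..
    with f True show ?thesis by (metis mult_zero_left mult_zero_right)
  next
    case False
    with N_nonneg[OF f] have Nf: "N f > 0" by simp
    have "cmod (T v f) \<le> 4 * (real n * M v) / r * N f"
    proof (rule linear_functional_bound_from_ball[OF T_lincomb[OF v f0 f] _ r Nf])
      fix c assume c: "cmod c * N f < r"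
      have g: "(\<lambda>x. f0 x + c * f x) \<in> P" by (rule lincomb_closed[OF f0 f])
      have "d f0 (\<lambda>x. f0 x + c * f x) = N (\<lambda>x. (- c) * f x)" using dist_eq[OF f0 g] by simp
      also have "\<dots> \<le> cmod c * N f" using N_cmult[OF f, of "- c"] by simp
      finally show "cmod (T v (\<lambda>x. f0 x + c * f x)) \<le> real n * M v"
        using ball[OF _ v] f0 g c by simp
    qed
    also have "\<dots> = 4 * real n / r * N f * M v" by simp
    also have "\<dots> \<le> C * N f * M v"
      using Nf M_nonneg[OF v] by (intro mult_right_mono) (auto simp: C_def)
    finally show ?thesis .
  qed
  moreover have "C > 0" unfolding C_def using r by (intro add_nonneg_pos divide_nonneg_pos) auto
  ultimately show ?thesis by blast
qed

end

section \<open>The polar of the kernel of the transpose\<close>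

text \<open>Outside \<open>P\<close> the distance is set to \<open>0\<close>: the locale \<^locale>\<open>Metric_space\<close> demands symmetry
  everywhere, whereas \<open>wnorm (f - g) = wnorm (g - f)\<close> is only available for smooth \<open>f\<close>, \<open>g\<close>.\<close>

definition Eh_dist :: "(real^'n::finite \<Rightarrow> complex) set \<Rightarrow> (real \<Rightarrow> real) \<Rightarrow> real \<Rightarrow>
                        (real^'n \<Rightarrow> complex) \<Rightarrow> (real^'n \<Rightarrow> complex) \<Rightarrow> real" where
  "Eh_dist P \<omega> h f g = (if f \<in> P \<and> g \<in> P then wnorm_real \<omega> (1/h) (\<lambda>x. f x - g x) else 0)"

lemma Metric_space_Eh_dist:
  assumes P: "P \<subseteq> Eh \<omega> h"
  shows "Metric_space P (Eh_dist P \<omega> h)"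
proof
  fix f g k
  show "0 \<le> Eh_dist P \<omega> h f g" by (simp add: Eh_dist_def wnorm_real_nonneg)
  show "Eh_dist P \<omega> h f g = Eh_dist P \<omega> h g f"
    using P wnorm_real_diff_commute[of f \<omega> h g] by (auto simp: Eh_dist_def)
  assume f: "f \<in> P" and g: "g \<in> P"
  then have fg: "f \<in> Eh \<omega> h" "g \<in> Eh \<omega> h" using P by auto
  show "Eh_dist P \<omega> h f g = 0 \<longleftrightarrow> f = g"
    using f g wnorm_real_eq_0_imp[OF Eh_diff[OF fg]] by (auto simp: Eh_dist_def wnorm_real_zero)
  assume k: "k \<in> P"
  then have "k \<in> Eh \<omega> h" using P by auto
  have "(\<lambda>x. f x - k x) = (\<lambda>x. (f x - g x) + (g x - k x))" by simp
  then have "wnorm_real \<omega> (1/h) (\<lambda>x. f x - k x)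
             \<le> wnorm_real \<omega> (1/h) (\<lambda>x. f x - g x) + wnorm_real \<omega> (1/h) (\<lambda>x. g x - k x)"
    using wnorm_real_add_le[OF Eh_diff[OF fg] Eh_diff[OF fg(2) \<open>k \<in> Eh \<omega> h\<close>]] by simp
  then show "Eh_dist P \<omega> h f k \<le> Eh_dist P \<omega> h f g + Eh_dist P \<omega> h g k"
    using f g k by (simp add: Eh_dist_def)
qed

lemma dual_add: "\<mu> \<in> dual \<omega> \<Longrightarrow> f \<in> Eom \<omega> \<Longrightarrow> g \<in> Eom \<omega> \<Longrightarrow> \<mu> (\<lambda>x. f x + g x) = \<mu> f + \<mu> g"
  unfolding dual_def by blast

lemma dual_cmult: "\<mu> \<in> dual \<omega> \<Longrightarrow> f \<in> Eom \<omega> \<Longrightarrow> \<mu> (\<lambda>x. c * f x) = c * \<mu> f"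
  unfolding dual_def by blast

lemma dual_bounded:
  assumes "\<mu> \<in> dual \<omega>" "h > 0"
  obtains C where "\<And>f. f \<in> Eh \<omega> h \<Longrightarrow> cmod (\<mu> f) \<le> C * wnorm_real \<omega> (1/h) f"
proof -
  obtain C where C: "\<forall>f\<in>Eh \<omega> h. ereal (cmod (\<mu> f)) \<le> ereal C * wnorm \<omega> (1/h) f"
    using assms unfolding dual_def by blast
  have "cmod (\<mu> f) \<le> C * wnorm_real \<omega> (1/h) f" if "f \<in> Eh \<omega> h" for f
  proof -
    from C that have "ereal (cmod (\<mu> f)) \<le> ereal C * wnorm \<omega> (1/h) f" by blast
    also have "\<dots> = ereal (C * wnorm_real \<omega> (1/h) f)"
      using that wnorm_eq_wnorm_real[of \<omega> "1/h" f] by (simp add: Eh_iff)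
    finally show ?thesis by simp
  qed
  with that show ?thesis by blast
qed

lemma polar_Eh_lincomb:
  assumes h: "h > 0" and f: "f \<in> polar_ker_tL \<omega> m a \<inter> Eh \<omega> h" and g: "g \<in> polar_ker_tL \<omega> m a \<inter> Eh \<omega> h"
  shows "(\<lambda>x. f x + c * g x) \<in> polar_ker_tL \<omega> m a \<inter> Eh \<omega> h"
proof -
  have cg: "(\<lambda>x. c * g x) \<in> Eh \<omega> h" using g by (simp add: Eh_cmult)
  have fcg: "(\<lambda>x. f x + c * g x) \<in> Eh \<omega> h" using f cg by (simp add: Eh_add)
  have "\<mu> (\<lambda>x. f x + c * g x) = 0" if "\<mu> \<in> ker_tL \<omega> m a" for \<mu>
  proof -
    have \<mu>: "\<mu> \<in> dual \<omega>" "\<mu> f = 0" "\<mu> g = 0" using that f g by (auto simp: ker_tL_def polar_ker_tL_def)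
    have "f \<in> Eom \<omega>" "g \<in> Eom \<omega>" "(\<lambda>x. c * g x) \<in> Eom \<omega>"
      using f g cg Eh_subset_Eom[OF h] by auto
    with \<mu> dual_add[OF \<mu>(1), of f "\<lambda>x. c * g x"] dual_cmult[OF \<mu>(1), of g c] show ?thesis by simp
  qed
  with fcg Eh_subset_Eom[OF h] show ?thesis by (auto simp: polar_ker_tL_def)
qed

lemma zero_in_polar_Eh: "h > 0 \<Longrightarrow> (\<lambda>x. 0) \<in> polar_ker_tL \<omega> m a \<inter> Eh \<omega> h"
proof -
  assume h: "h > 0"
  then have zero: "(\<lambda>x. 0) \<in> Eom \<omega>" using Eh_zero Eh_subset_Eom by blast
  have "\<mu> (\<lambda>x. 0 * 0) = 0 * \<mu> (\<lambda>x. 0)" if "\<mu> \<in> ker_tL \<omega> m a" for \<mu>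
    using that zero by (intro dual_cmult) (auto simp: ker_tL_def)
  then show ?thesis using Eh_zero zero by (auto simp: polar_ker_tL_def)
qed

lemma polar_closed_under_Eh_limits:
  fixes \<sigma> :: "nat \<Rightarrow> real^'n::finite \<Rightarrow> complex"
  assumes h: "h > 0" and \<sigma>: "\<And>n. \<sigma> n \<in> polar_ker_tL \<omega> m a \<inter> Eh \<omega> h" and f: "f \<in> Eh \<omega> h"
    and approx: "\<And>\<epsilon>. \<epsilon> > 0 \<Longrightarrow> \<exists>N. \<forall>n\<ge>N. wnorm_real \<omega> (1/h) (\<lambda>x. \<sigma> n x - f x) \<le> \<epsilon>"
  shows "f \<in> polar_ker_tL \<omega> m a"
proof -
  have "\<mu> f = 0" if \<mu>: "\<mu> \<in> ker_tL \<omega> m a" for \<mu>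
  proof -
    have dual: "\<mu> \<in> dual \<omega>" using \<mu> by (simp add: ker_tL_def)
    obtain C where C: "\<And>g. g \<in> Eh \<omega> h \<Longrightarrow> cmod (\<mu> g) \<le> C * wnorm_real \<omega> (1/h) g"
      using dual_bounded[OF dual h] by blast
    have "cmod (\<mu> f) \<le> 0 + e" if e: "e > 0" for e
    proof -
      have C1: "\<bar>C\<bar> + 1 > 0" using abs_ge_zero[of C] by linarith
      have "e / (\<bar>C\<bar> + 1) > 0" using e C1 by (rule divide_pos_pos)
      from approx[OF this] obtain n
        where "\<forall>k\<ge>n. wnorm_real \<omega> (1/h) (\<lambda>x. \<sigma> k x - f x) \<le> e / (\<bar>C\<bar> + 1)" ..
      then have n: "wnorm_real \<omega> (1/h) (\<lambda>x. \<sigma> n x - f x) \<le> e / (\<bar>C\<bar> + 1)" by simp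
      have d: "(\<lambda>x. \<sigma> n x - f x) \<in> Eh \<omega> h" using \<sigma> f by (simp add: Eh_diff)
      have "\<mu> (\<sigma> n) = \<mu> (\<lambda>x. f x + (\<sigma> n x - f x))" by simp
      also have "\<dots> = \<mu> f + \<mu> (\<lambda>x. \<sigma> n x - f x)"
        by (rule dual_add[OF dual]) (use d f Eh_subset_Eom[OF h] in auto)
      moreover have "\<mu> (\<sigma> n) = 0" using \<sigma>[of n] \<mu> by (simp add: polar_ker_tL_def)
      ultimately have "\<mu> f = - \<mu> (\<lambda>x. \<sigma> n x - f x)" by (simp add: eq_neg_iff_add_eq_0)
      then have "cmod (\<mu> f) = cmod (\<mu> (\<lambda>x. \<sigma> n x - f x))" by simp
      also have "\<dots> \<le> \<bar>C\<bar> * wnorm_real \<omega> (1/h) (\<lambda>x. \<sigma> n x - f x)"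
        using C[OF d] wnorm_real_nonneg by (meson abs_ge_self mult_right_mono order_trans)
      also have "\<dots> \<le> \<bar>C\<bar> * (e / (\<bar>C\<bar> + 1))" using n abs_ge_zero by (rule mult_left_mono)
      also have "\<dots> \<le> e" using e C1 by (simp add: field_simps)
      finally show ?thesis by simp
    qed
    then show ?thesis using field_le_epsilon[of "cmod (\<mu> f)" 0] by simp
  qed
  with f Eh_subset_Eom[OF h] show ?thesis by (auto simp: polar_ker_tL_def)
qed

lemma mcomplete_polar_Eh:
  fixes \<omega> :: "real \<Rightarrow> real" and m :: nat and a :: "('n::finite \<Rightarrow> nat) \<Rightarrow> real^'n \<Rightarrow> complex"
  assumes h: "h > 0"
  defines "P \<equiv> polar_ker_tL \<omega> m a \<inter> Eh \<omega> h"
  shows "Metric_space.mcomplete P (Eh_dist P \<omega> h)"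
proof -
  interpret Metric_space P "Eh_dist P \<omega> h" by (rule Metric_space_Eh_dist) (simp add: P_def)
  show ?thesis unfolding mcomplete_def
  proof (intro allI impI)
    fix \<sigma> assume "MCauchy \<sigma>"
    then have \<sigma>: "\<And>n. \<sigma> n \<in> P" unfolding MCauchy_def by auto
    have Cauchy: "\<And>\<epsilon>. \<epsilon> > 0 \<Longrightarrow> \<exists>N. \<forall>n\<ge>N. \<forall>n'\<ge>N. wnorm_real \<omega> (1/h) (\<lambda>x. \<sigma> n x - \<sigma> n' x) < \<epsilon>"
      using \<open>MCauchy \<sigma>\<close> \<sigma> unfolding MCauchy_def by (simp add: Eh_dist_def)
    obtain f where f: "f \<in> Eh \<omega> h"
      and approx: "\<And>\<epsilon>. \<epsilon> > 0 \<Longrightarrow> \<exists>N. \<forall>n\<ge>N. wnorm_real \<omega> (1/h) (\<lambda>x. \<sigma> n x - f x) \<le> \<epsilon>"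
      using Eh_complete[of \<sigma> \<omega> h] \<sigma> Cauchy by (auto simp: P_def)
    have fP: "f \<in> P"
      using polar_closed_under_Eh_limits[OF h _ f approx] \<sigma> f by (simp add: P_def)
    have "limitin mtopology \<sigma> f sequentially"
      unfolding limit_metric_sequentially
    proof (intro conjI fP allI impI)
      fix \<epsilon> :: real assume "\<epsilon> > 0"
      then obtain N where "\<forall>n\<ge>N. wnorm_real \<omega> (1/h) (\<lambda>x. \<sigma> n x - f x) \<le> \<epsilon> / 2"
        using approx[of "\<epsilon> / 2"] by auto
      with \<sigma> fP \<open>\<epsilon> > 0\<close> show "\<exists>N. \<forall>n\<ge>N. \<sigma> n \<in> P \<and> Eh_dist P \<omega> h (\<sigma> n) f < \<epsilon>"
        by (force simp: Eh_dist_def)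
    qed
    then show "\<exists>x. limitin mtopology \<sigma> x sequentially" by blast
  qed
qed

section \<open>The a priori estimate\<close>

lemma torus_integral_lincomb_mult:
  assumes "smooth_periodic f" "smooth_periodic g" "smooth_periodic v"
  shows "torus_integral (\<lambda>x. (f x + c * g x) * v x)
         = torus_integral (\<lambda>x. f x * v x) + c * torus_integral (\<lambda>x. g x * v x)"
proof -
  have "(\<lambda>x. (f x + c * g x) * v x) = (\<lambda>x. f x * v x + c * (g x * v x))"
    by (simp add: algebra_simps)
  moreover have "(\<lambda>x. f x * v x) integrable_on cbox 0 (\<chi> j. 2*pi)"
    "(\<lambda>x. g x * v x) integrable_on cbox 0 (\<chi> j. 2*pi)"
    using assms by (auto intro!: smooth_periodic_integrable smooth_periodic_mult)
  ultimately show ?thesis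
    unfolding torus_integral_def by (simp add: integral_add integrable_on_mult_right)
qed

lemma torus_integral_mult_bound:
  fixes f g :: "real^'n::finite \<Rightarrow> complex"
  assumes "continuous_on UNIV f" "continuous_on UNIV g" "\<And>x. cmod (f x) \<le> A" "\<And>x. cmod (g x) \<le> B"
  shows "cmod (torus_integral (\<lambda>x. f x * g x)) \<le> A * B * (2*pi) ^ CARD('n)"
  using assms by (intro torus_integral_bound continuous_on_mult)
    (auto simp: norm_mult intro!: mult_mono order_trans[OF norm_ge_zero assms(3)])

lemma torus_integral_mult_bounded:
  fixes v :: "real^'n::finite \<Rightarrow> complex"
  assumes "v \<in> Eom \<omega>"
  shows "\<exists>c. \<forall>f\<in>Eh \<omega> h. cmod (torus_integral (\<lambda>x. f x * v x)) \<le> c * wnorm_real \<omega> (1/h) f"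
proof -
  obtain B where B: "\<And>x. cmod (v x) \<le> B" using Eom_bounded[OF assms] by blast
  define w where "w = wnorm_weight \<omega> (1/h) (\<lambda>i::'n. 0)"
  have "cmod (torus_integral (\<lambda>x. f x * v x)) \<le> B / w * (2*pi) ^ CARD('n) * wnorm_real \<omega> (1/h) f"
    if f: "f \<in> Eh \<omega> h" for f
  proof -
    have "cmod (torus_integral (\<lambda>x. f x * v x)) \<le> wnorm_real \<omega> (1/h) f / w * B * (2*pi) ^ CARD('n)"
      using f B Eom_imp_smooth_periodic[OF assms] norm_le_wnorm_real[of \<omega> "1/h" f]
      by (intro torus_integral_mult_bound) (auto simp: Eh_iff w_def smooth_periodic_imp_continuous)
    then show ?thesis by (simp add: field_simps)
  qed
  then show ?thesis by blast
qed

lemma solvable_pointwise_bound: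
  fixes a :: "('n::finite \<Rightarrow> nat) \<Rightarrow> real^'n \<Rightarrow> complex"
  assumes a: "\<And>\<alpha>. mlen \<alpha> \<le> m \<Longrightarrow> a \<alpha> \<in> Eom \<omega>"
    and solvable: "globally_solvable \<omega> m a" and f: "f \<in> polar_ker_tL \<omega> m a"
  shows "\<exists>B. \<forall>v\<in>{v \<in> Eom \<omega>. tLop m a v \<in> Eh \<omega> k}.
           cmod (torus_integral (\<lambda>x. f x * v x)) \<le> B * wnorm_real \<omega> (1/k) (tLop m a v)"
proof -
  obtain u where u: "u \<in> Eom \<omega>" and f_eq: "f = Lop m a u"
    using f solvable unfolding globally_solvable_def by blast
  obtain B where B: "\<And>x. cmod (u x) \<le> B" using Eom_bounded[OF u] by blast
  define w where "w = wnorm_weight \<omega> (1/k) (\<lambda>i::'n. 0)"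
  have "cmod (torus_integral (\<lambda>x. f x * v x)) \<le> B / w * (2*pi) ^ CARD('n) * wnorm_real \<omega> (1/k) (tLop m a v)"
    if v: "v \<in> Eom \<omega>" "tLop m a v \<in> Eh \<omega> k" for v
  proof -
    have "torus_integral (\<lambda>x. f x * v x) = torus_integral (\<lambda>x. u x * tLop m a v x)"
      unfolding f_eq using u v a by (intro torus_integral_Lop_mult) (auto intro: Eom_imp_smooth_periodic)
    also have "cmod \<dots> \<le> B * (wnorm_real \<omega> (1/k) (tLop m a v) / w) * (2*pi) ^ CARD('n)"
      using u v B norm_le_wnorm_real[of \<omega> "1/k" "tLop m a v"]
      by (intro torus_integral_mult_bound)
         (auto simp: Eh_iff w_def intro: smooth_periodic_imp_continuous Eom_imp_smooth_periodic)
    finally show ?thesis by (simp add: field_simps)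
  qed
  then show ?thesis by blast
qed

lemma polar_pairing_estimate:
  fixes a :: "('n::finite \<Rightarrow> nat) \<Rightarrow> real^'n \<Rightarrow> complex"
  assumes a: "\<And>\<alpha>. mlen \<alpha> \<le> m \<Longrightarrow> a \<alpha> \<in> Eom \<omega>"
    and solvable: "globally_solvable \<omega> m a" and h: "h > 0"
  shows "\<exists>C>0. \<forall>f\<in>polar_ker_tL \<omega> m a \<inter> Eh \<omega> h. \<forall>v\<in>{v \<in> Eom \<omega>. tLop m a v \<in> Eh \<omega> k}.
           cmod (torus_integral (\<lambda>x. f x * v x))
             \<le> C * wnorm_real \<omega> (1/h) f * wnorm_real \<omega> (1/k) (tLop m a v)"
proof -
  let ?P = "polar_ker_tL \<omega> m a \<inter> Eh \<omega> h" and ?I = "{v \<in> Eom \<omega>. tLop m a v \<in> Eh \<omega> k}"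
  interpret functionals_on_complete_space ?P "Eh_dist ?P \<omega> h" "wnorm_real \<omega> (1/h)" ?I
    "\<lambda>v f. torus_integral (\<lambda>x. f x * v x)"
  proof (intro functionals_on_complete_space.intro functionals_on_complete_space_axioms.intro)
    show "Metric_space ?P (Eh_dist ?P \<omega> h)" by (rule Metric_space_Eh_dist) blast
    show "Metric_space.mcomplete ?P (Eh_dist ?P \<omega> h)" by (rule mcomplete_polar_Eh[OF h])
    show "Eh_dist ?P \<omega> h f g = wnorm_real \<omega> (1/h) (\<lambda>x. f x - g x)" if "f \<in> ?P" "g \<in> ?P" for f g
      using that by (simp add: Eh_dist_def)
    show "?P \<noteq> {}" using zero_in_polar_Eh[OF h] by blast
    show "(\<lambda>x. f x + c * g x) \<in> ?P" if "f \<in> ?P" "g \<in> ?P" for f g c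
      using polar_Eh_lincomb[OF h that] .
    show "wnorm_real \<omega> (1/h) (\<lambda>x. c * f x) \<le> cmod c * wnorm_real \<omega> (1/h) f" if "f \<in> ?P" for f c
      using that by (simp add: wnorm_real_cmult_le)
    show "torus_integral (\<lambda>x. (f x + c * g x) * v x)
          = torus_integral (\<lambda>x. f x * v x) + c * torus_integral (\<lambda>x. g x * v x)"
      if "v \<in> ?I" "f \<in> ?P" "g \<in> ?P" for v f g c
      using that by (intro torus_integral_lincomb_mult) (auto simp: Eh_iff intro: Eom_imp_smooth_periodic)
    show "\<exists>c. \<forall>f\<in>?P. cmod (torus_integral (\<lambda>x. f x * v x)) \<le> c * wnorm_real \<omega> (1/h) f"
      if "v \<in> ?I" for v
      using torus_integral_mult_bounded[of v \<omega> h] that by blast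
  qed
  show ?thesis
    using solvable_pointwise_bound[OF a solvable]
    by (intro uniform_boundedness) (auto simp: wnorm_real_nonneg)
qed

theorem lemma3p2:
  fixes \<omega> :: "real \<Rightarrow> real"
    and m :: nat
    and a :: "('n::finite \<Rightarrow> nat) \<Rightarrow> real^'n \<Rightarrow> complex"
  assumes "weight_function \<omega>"
    and "\<And>\<alpha>. mlen \<alpha> \<le> m \<Longrightarrow> a \<alpha> \<in> Eom \<omega>"
    and "globally_solvable \<omega> m a"
  shows "\<forall>h>0. \<forall>k>0. \<exists>C>0. \<forall>f v.
           f \<in> polar_ker_tL \<omega> m a \<and> f \<in> Eh \<omega> h \<and> v \<in> Eom \<omega> \<and> tLop m a v \<in> Eh \<omega> k \<longrightarrow>
           ereal (cmod (torus_integral (\<lambda>x. f x * v x)))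
             \<le> ereal C * wnorm \<omega> (1/h) f * wnorm \<omega> (1/k) (tLop m a v)"
proof (intro allI impI)
  fix h k :: real assume "h > 0" "k > 0"
  then obtain C where "C > 0" and C: "\<forall>f\<in>polar_ker_tL \<omega> m a \<inter> Eh \<omega> h. \<forall>v\<in>{v \<in> Eom \<omega>. tLop m a v \<in> Eh \<omega> k}.
      cmod (torus_integral (\<lambda>x. f x * v x)) \<le> C * wnorm_real \<omega> (1/h) f * wnorm_real \<omega> (1/k) (tLop m a v)"
    using polar_pairing_estimate[OF assms(2,3)] by blast
  show "\<exists>C>0. \<forall>f v. f \<in> polar_ker_tL \<omega> m a \<and> f \<in> Eh \<omega> h \<and> v \<in> Eom \<omega> \<and>
      tLop m a v \<in> Eh \<omega> k \<longrightarrow> ereal (cmod (torus_integral (\<lambda>x. f x * v x)))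
        \<le> ereal C * wnorm \<omega> (1/h) f * wnorm \<omega> (1/k) (tLop m a v)"
  proof (intro exI[of _ C] conjI allI impI \<open>C > 0\<close>)
    fix f v assume fv: "f \<in> polar_ker_tL \<omega> m a \<and> f \<in> Eh \<omega> h \<and> v \<in> Eom \<omega> \<and> tLop m a v \<in> Eh \<omega> k"
    then have "wnorm \<omega> (1/h) f = ereal (wnorm_real \<omega> (1/h) f)"
      "wnorm \<omega> (1/k) (tLop m a v) = ereal (wnorm_real \<omega> (1/k) (tLop m a v))"
      by (simp_all add: wnorm_eq_wnorm_real Eh_iff)
    with C fv show "ereal (cmod (torus_integral (\<lambda>x. f x * v x)))
        \<le> ereal C * wnorm \<omega> (1/h) f * wnorm \<omega> (1/k) (tLop m a v)" by simp
  qed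
qed

end
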